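(* Let $\Gamma>0$ and $B\in\mathbb{R}$. For $N\in\mathbb{N}_+$ let $\bar H_N^{s}$ be the $(N+1)\times(N+1)$ real matrix \[ \bar H_N^{s}=\operatorname*{diag}_{1\le k\le N+1}\Big(-\frac{\Gamma}{2}\Big(\frac{2k}{N}-1\Big)^2\Big)+\mathrm{tridiag}\Big(-B\sqrt{1-\tfrac{k-1}{N}}\sqrt{\tfrac{k}{N}},\;0,\;-B\sqrt{1-\tfrac{k}{N}}\sqrt{\tfrac{k+1}{N}}\Big), \] (the normalized quantum Curie–Weiss Hamiltonian $H_N^{\mathrm{CW}}/N$ restricted to the symmetric subspace $\mathrm{Sym}^N(\mathbb{C}^2)$, written in a suitable basis). Let \[ h_0^{\mathrm{CW}}(x,\theta)=-\frac{\Gamma}{2}(2x-1)^2-2B\sqrt{(1-x)x}\,\cos\theta,\qquad x\in[0,1],\ \theta\in[-\pi,\pi]. \] Then $\{\bar H_N^{s}\}_N\sim_{\mathrm{GLT}}h_0^{\mathrm{CW}}$, $\{\bar H_N^{s}\}_N\sim_{\sigma}h_0^{\mathrm{CW}}$ and $\{\bar H_N^{s}\}_N\sim_{\lambda}h_0^{\mathrm{CW}}$.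
   Context: $\mathrm{tridiag}(\ell_k,0,u_k)$ denotes the matrix with zero main diagonal, subdiagonal entries $\ell_k$ and superdiagonal entries $u_k$ (indexed by the row/column position $k$). Distributions: for measurable $\kappa:D=[0,1]\times[-\pi,\pi]\to\mathbb{C}$, $\{A_N\}\sim_\sigma\kappa$ means $\lim_N\frac{1}{d_N}\sum_jF(\sigma_j(A_N))=\frac{1}{2\pi}\int_D F(|\kappa(x,\theta)|)\,dx\,d\theta$ for all $F\in C_c(\mathbb{R})$ ($d_N$ the size of $A_N$), and $\sim_\lambda$ is the same with eigenvalues, $F\in C_c(\mathbb{C})$ and $F(\kappa)$. $\{A_N\}\sim_{\mathrm{GLT}}\kappa$ means $\{A_N\}$ is a (unilevel, scalar) GLT sequence with symbol $\kappa$: the GLT class is the $*$-algebra of matrix-sequences generated by Toeplitz sequences $\{T_n(f)\}$, $T_n(f)=[\hat f_{i-j}]_{i,j=1}^n$ with $f\in L^1([-\pi,\pi])$ (symbol $f(\theta)$), diagonal sampling sequences $\{D_n(a)\}$, $D_n(a)=\mathrm{diag}_{i=1..n}a(i/n)$ with $a$ Riemann integrable on $[0,1]$ (symbol $a(x)$), and zero-distributed sequences (symbol $0$), closed under limits in the approximating-class-of-sequences topology, with the symbol map a $*$-homomorphism; every GLT sequence with symbol $\kappa$ satisfies $\sim_\sigma\kappa$, and $\sim_\lambda\kappa$ if its matrices are Hermitian. *)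

theory Defs
  imports "HOL-Analysis.Analysis" "Jordan_Normal_Form.Jordan_Normal_Form" "Jordan_Normal_Form.Schur_Decomposition"
    "Jordan_Normal_Form.DL_Rank"
begin

definition eig_sum :: "(complex \<Rightarrow> complex) \<Rightarrow> complex mat \<Rightarrow> complex" where
  "eig_sum F A = (\<Sum>\<mu>\<in>{\<mu>. poly (char_poly A) \<mu> = 0}.
      of_nat (Polynomial.order \<mu> (char_poly A)) * F \<mu>)"

definition sv_sum :: "(real \<Rightarrow> complex) \<Rightarrow> complex mat \<Rightarrow> complex" where
  "sv_sum F A = (\<Sum>\<mu>\<in>{\<mu>. poly (char_poly (mat_adjoint A * A)) \<mu> = 0}.
      of_nat (Polynomial.order \<mu> (char_poly (mat_adjoint A * A))) * F (sqrt (Re \<mu>)))"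

text \<open>Spectral norm = largest singular value (0 for the empty matrix).\<close>
definition spec_norm :: "complex mat \<Rightarrow> real" where
  "spec_norm A = Max ({sqrt (Re \<mu>) | \<mu>. poly (char_poly (mat_adjoint A * A)) \<mu> = 0} \<union> {0})"

definition symD :: "(real \<times> real) set" where
  "symD = {0..1} \<times> {-pi..pi}"

definition compact_supp :: "('a::real_normed_vector \<Rightarrow> complex) \<Rightarrow> bool" where
  "compact_supp F \<longleftrightarrow> continuous_on UNIV F \<and> compact (closure {x. F x \<noteq> 0})"

definition sigma_distributed :: "(nat \<Rightarrow> complex mat) \<Rightarrow> (real \<times> real \<Rightarrow> complex) \<Rightarrow> bool" where
  "sigma_distributed A \<kappa> \<longleftrightarrow>
     (\<forall>F :: real \<Rightarrow> complex. compact_supp F \<longrightarrow>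
        (\<lambda>n. sv_sum F (A n) / of_nat (dim_row (A n)))
          \<longlonglongrightarrow> integral symD (\<lambda>p. F (cmod (\<kappa> p))) / (2 * pi))"

definition lambda_distributed :: "(nat \<Rightarrow> complex mat) \<Rightarrow> (real \<times> real \<Rightarrow> complex) \<Rightarrow> bool" where
  "lambda_distributed A \<kappa> \<longleftrightarrow>
     (\<forall>F :: complex \<Rightarrow> complex. compact_supp F \<longrightarrow>
        (\<lambda>n. eig_sum F (A n) / of_nat (dim_row (A n)))
          \<longlonglongrightarrow> integral symD (\<lambda>p. F (\<kappa> p)) / (2 * pi))"

definition zero_distributed :: "(nat \<Rightarrow> complex mat) \<Rightarrow> bool" where
  "zero_distributed A \<longleftrightarrow> sigma_distributed A (\<lambda>_. 0)"

definition mseq :: "(nat \<Rightarrow> complex mat) \<Rightarrow> bool" where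
  "mseq A \<longleftrightarrow> (\<forall>n. A n \<in> carrier_mat n n)"

definition fourier_coeff :: "(real \<Rightarrow> complex) \<Rightarrow> int \<Rightarrow> complex" where
  "fourier_coeff f k = integral {-pi..pi} (\<lambda>\<theta>. f \<theta> * exp (- (\<i> * of_real (of_int k * \<theta>)))) / (2 * pi)"

definition toeplitz :: "nat \<Rightarrow> (real \<Rightarrow> complex) \<Rightarrow> complex mat" where
  "toeplitz n f = mat n n (\<lambda>(i, j). fourier_coeff f (int i - int j))"

definition diag_sample :: "nat \<Rightarrow> (real \<Rightarrow> complex) \<Rightarrow> complex mat" where
  "diag_sample n a = mat n n (\<lambda>(i, j). if i = j then a (real (Suc i) / real n) else 0)"

text \<open>Riemann integrability on [0,1]: Riemann sums over tagged divisions of mesh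
  (uniform gauge) less than delta converge.\<close>
definition riemann_integrable01 :: "(real \<Rightarrow> complex) \<Rightarrow> bool" where
  "riemann_integrable01 a \<longleftrightarrow> (\<exists>I. \<forall>e>0. \<exists>\<delta>>0. \<forall>\<D>.
      \<D> tagged_division_of {0..1} \<and> (\<lambda>x. ball x \<delta>) fine \<D> \<longrightarrow>
        norm ((\<Sum>(x, K)\<in>\<D>. Henstock_Kurzweil_Integration.content K *\<^sub>R a x) - I) < e)"

definition acs :: "(nat \<Rightarrow> nat \<Rightarrow> complex mat) \<Rightarrow> (nat \<Rightarrow> complex mat) \<Rightarrow> bool" where
  "acs Bs A \<longleftrightarrow> (\<exists>c \<omega> :: nat \<Rightarrow> real. c \<longlonglongrightarrow> 0 \<and> \<omega> \<longlonglongrightarrow> 0 \<and>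
     (\<forall>m. \<exists>nm. \<forall>n\<ge>nm. \<exists>R N. R \<in> carrier_mat n n \<and> N \<in> carrier_mat n n \<and>
        A n = Bs m n + R + N \<and> real (vec_space.rank n R) \<le> c m * real n \<and> spec_norm N \<le> \<omega> m))"

definition conv_in_measure :: "(nat \<Rightarrow> real \<times> real \<Rightarrow> complex) \<Rightarrow> (real \<times> real \<Rightarrow> complex) \<Rightarrow> bool" where
  "conv_in_measure \<kappa>s \<kappa> \<longleftrightarrow> (\<forall>\<epsilon>>0.
      (\<lambda>m. emeasure lebesgue {p \<in> symD. \<epsilon> < cmod (\<kappa>s m p - \<kappa> p)}) \<longlonglongrightarrow> 0)"

inductive GLT :: "(nat \<Rightarrow> complex mat) \<Rightarrow> (real \<times> real \<Rightarrow> complex) \<Rightarrow> bool" where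
  toeplitz: "f absolutely_integrable_on {-pi..pi} \<Longrightarrow>
     GLT (\<lambda>n. toeplitz n f) (\<lambda>(x, \<theta>). f \<theta>)"
| diag: "riemann_integrable01 a \<Longrightarrow> GLT (\<lambda>n. diag_sample n a) (\<lambda>(x, \<theta>). a x)"
| zero: "mseq Z \<Longrightarrow> zero_distributed Z \<Longrightarrow> GLT Z (\<lambda>_. 0)"
| add: "GLT A \<kappa> \<Longrightarrow> GLT B \<eta> \<Longrightarrow> GLT (\<lambda>n. A n + B n) (\<lambda>p. \<kappa> p + \<eta> p)"
| mult: "GLT A \<kappa> \<Longrightarrow> GLT B \<eta> \<Longrightarrow> GLT (\<lambda>n. A n * B n) (\<lambda>p. \<kappa> p * \<eta> p)"
| scale: "GLT A \<kappa> \<Longrightarrow> GLT (\<lambda>n. c \<cdot>\<^sub>m A n) (\<lambda>p. c * \<kappa> p)"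
| adjoint: "GLT A \<kappa> \<Longrightarrow> GLT (\<lambda>n. mat_adjoint (A n)) (\<lambda>p. cnj (\<kappa> p))"
| limit: "(\<And>m. GLT (Bs m) (\<kappa>s m)) \<Longrightarrow> mseq A \<Longrightarrow> acs Bs A \<Longrightarrow>
     (\<And>m. \<kappa>s m \<in> borel_measurable (lebesgue_on symD)) \<Longrightarrow>
     \<kappa> \<in> borel_measurable (lebesgue_on symD) \<Longrightarrow>
     conv_in_measure \<kappa>s \<kappa> \<Longrightarrow> GLT A \<kappa>"

text \<open>The (N+1)x(N+1) matrix, 0-based index i = k - 1; entry (k,k-1) is l_k, entry (k,k+1) is u_k.\<close>
definition Hbar :: "real \<Rightarrow> real \<Rightarrow> nat \<Rightarrow> real mat" where
  "Hbar \<Gamma> B N = mat (N + 1) (N + 1) (\<lambda>(i, j).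
     (let k = real (Suc i) in
      if j = i then - \<Gamma> / 2 * (2 * k / real N - 1)\<^sup>2
      else if j + 1 = i then - B * sqrt (1 - (k - 1) / real N) * sqrt (k / real N)
      else if j = i + 1 then - B * sqrt (1 - k / real N) * sqrt ((k + 1) / real N)
      else 0))"

definition h0CW :: "real \<Rightarrow> real \<Rightarrow> real \<times> real \<Rightarrow> complex" where
  "h0CW \<Gamma> B = (\<lambda>(x, \<theta>). complex_of_real
     (- \<Gamma> / 2 * (2 * x - 1)\<^sup>2 - 2 * B * sqrt ((1 - x) * x) * cos \<theta>))"

end

theory Submission
  imports Defs
begin

(* The matrices are real symmetric tridiagonal, with diagonal and off-diagonal entries that are,
   up to O(N^(-1/2)), samples of a(x) = -\<Gamma>/2 (2x-1)^2 and c(x) = -B sqrt((1-x)x). Near row i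
   they look like the Toeplitz matrix of a(x) + 2 c(x) cos \<theta> with x = i/N, so the i-th diagonal
   entry of H^k is close to the mean of (a(x) + 2 c(x) cos \<theta>)^k over \<theta>, and tr(H^k)/(N+1) is a
   Riemann sum for (1/2\<pi>) \<integral> h^k. As the eigenvalues and the values of h lie in a fixed compact
   interval, Weierstrass approximation upgrades this moment convergence to the eigenvalue
   distribution, and to the singular value distribution because the singular values of a Hermitian
   matrix are the absolute values of its eigenvalues.
   For the GLT claim, D_n(a) + D_n(c) T_n(2 cos \<theta>) is GLT with symbol h by the algebra rules; it
   differs from the n-th matrix by a tridiagonal matrix with entries O(n^(-1/2)), whose spectral
   norm is small by the Schur test, so it is an approximating class. *)

definition mat_trace :: "'a::comm_monoid_add mat \<Rightarrow> 'a" where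
  "mat_trace A = (\<Sum>i<dim_row A. A $$ (i,i))"

lemma index_mult_mat_eq_sum:
  fixes A B :: "'a::semiring_0 mat"
  assumes "A \<in> carrier_mat n m" "B \<in> carrier_mat m k" "i < n" "j < k"
  shows "(A * B) $$ (i,j) = (\<Sum>l<m. A $$ (i,l) * B $$ (l,j))"
  using assms by (auto simp: scalar_prod_def atLeast0LessThan intro!: sum.cong)

lemma mat_trace_mult_comm:
  fixes A B :: "'a::comm_semiring_0 mat"
  assumes A: "A \<in> carrier_mat n m" and B: "B \<in> carrier_mat m n"
  shows "mat_trace (A * B) = mat_trace (B * A)"
proof -
  have "mat_trace (A * B) = (\<Sum>i<n. \<Sum>l<m. A $$ (i,l) * B $$ (l,i))"
    unfolding mat_trace_def using assms
    by (auto simp: index_mult_mat_eq_sum[OF A B] simp del: index_mult_mat(1) intro!: sum.cong)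
  also have "\<dots> = (\<Sum>l<m. \<Sum>i<n. B $$ (l,i) * A $$ (i,l))"
    by (subst sum.swap) (simp add: mult.commute)
  also have "\<dots> = mat_trace (B * A)"
    unfolding mat_trace_def using assms
    by (auto simp: index_mult_mat_eq_sum[OF B A] simp del: index_mult_mat(1) intro!: sum.cong)
  finally show ?thesis .
qed

lemma mat_trace_of_real:
  assumes "A \<in> carrier_mat n n"
  shows "mat_trace (map_mat complex_of_real A) = of_real (mat_trace A)"
  using assms by (simp add: mat_trace_def of_real_sum)

lemma upper_triangular_mult:
  fixes A B :: "'a::semiring_0 mat"
  assumes A: "A \<in> carrier_mat n n" and B: "B \<in> carrier_mat n n"
    and uA: "upper_triangular A" and uB: "upper_triangular B"
  shows "upper_triangular (A * B)"
    and "\<And>i. i < n \<Longrightarrow> (A * B) $$ (i,i) = A $$ (i,i) * B $$ (i,i)"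
proof -
  have zA: "A $$ (i,l) = 0" if "l < i" "i < n" for i l
    using uA A that unfolding upper_triangular_def by auto
  have zB: "B $$ (l,j) = 0" if "j < l" "l < n" for j l
    using uB B that unfolding upper_triangular_def by auto
  have vanish: "A $$ (i,l) * B $$ (l,j) = 0" if "i < n" "l < n" "l \<noteq> i \<or> l \<noteq> j" "j \<le> i" for i j l
    using zA[of l i] zB[of j l] that by (cases "l < i") auto
  show "upper_triangular (A * B)"
  proof (rule upper_triangularI)
    fix i j assume "j < i" "i < dim_row (A * B)"
    then show "(A * B) $$ (i,j) = 0"
      using A B vanish by (subst index_mult_mat_eq_sum[OF A B]) (auto intro!: sum.neutral)
  qed
  fix i assume i: "i < n"
  have "(A * B) $$ (i,i) = (\<Sum>l<n. A $$ (i,l) * B $$ (l,i))"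
    using i by (intro index_mult_mat_eq_sum[OF A B])
  also have "\<dots> = (\<Sum>l\<in>{i}. A $$ (i,l) * B $$ (l,i))"
    using i vanish[of i _ i] by (intro sum.mono_neutral_right) auto
  finally show "(A * B) $$ (i,i) = A $$ (i,i) * B $$ (i,i)" by simp
qed

lemma upper_triangular_pow:
  fixes B :: "'a::comm_semiring_1 mat"
  assumes B: "B \<in> carrier_mat n n" and uB: "upper_triangular B"
  shows "upper_triangular (B ^\<^sub>m k) \<and> (\<forall>i<n. (B ^\<^sub>m k) $$ (i,i) = B $$ (i,i) ^ k)"
proof (induction k)
  case 0
  then show ?case using B by auto
next
  case (Suc k)
  have Bk: "B ^\<^sub>m k \<in> carrier_mat n n" using B by simp
  show ?case using upper_triangular_mult[OF Bk B] Suc uB by (simp add: mult.commute)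
qed

lemma sum_list_map_eq_sum_of_nat_count:
  fixes f :: "'b \<Rightarrow> 'a::semiring_1"
  shows "(\<Sum>x\<leftarrow>xs. f x) = (\<Sum>x\<in>set xs. of_nat (count_list xs x) * f x)"
proof (induction xs)
  case Nil
  then show ?case by simp
next
  case (Cons x xs)
  have "(\<Sum>y\<in>set (x # xs). of_nat (count_list (x # xs) y) * f y)
      = (\<Sum>y\<in>set (x # xs). (if y = x then f x else 0) + of_nat (count_list xs y) * f y)"
    by (intro sum.cong) (auto simp: distrib_right)
  also have "\<dots> = f x + (\<Sum>y\<in>insert x (set xs). of_nat (count_list xs y) * f y)"
    by (simp add: sum.distrib)
  also have "(\<Sum>y\<in>insert x (set xs). of_nat (count_list xs y) * f y) = (\<Sum>x\<leftarrow>xs. f x)"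
    using Cons.IH by (cases "x \<in> set xs") (auto simp: insert_absorb count_list_0_iff)
  finally show ?case by simp
qed

lemma order_prod_linear_factors:
  fixes es :: "'a::idom list"
  shows "Polynomial.order \<mu> (\<Prod>e\<leftarrow>es. [:- e, 1:]) = count_list es \<mu>"
proof (induction es)
  case Nil
  then show ?case by (simp add: order_0I)
next
  case (Cons a es)
  have "[:- a, 1:] * (\<Prod>e\<leftarrow>es. [:- e, 1:]) \<noteq> 0"
    using prod_list_zero_iff[of "map (\<lambda>e. [:- e, 1:]) (a # es)"] by auto
  then have "Polynomial.order \<mu> (\<Prod>e\<leftarrow>a # es. [:- e, 1:])
      = Polynomial.order \<mu> [:- a, 1:] + Polynomial.order \<mu> (\<Prod>e\<leftarrow>es. [:- e, 1:])"
    unfolding list.map prod_list.Cons by (rule order_mult)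
  then show ?case using Cons by (simp add: order_linear')
qed

lemma eig_sum_linear_factors:
  assumes "char_poly A = (\<Prod>e\<leftarrow>es. [:- e, 1:])"
  shows "eig_sum F A = (\<Sum>e\<leftarrow>es. F e)"
proof -
  have "{\<mu>. poly (char_poly A) \<mu> = 0} = set es"
    unfolding assms poly_prod_list_zero_iff by auto
  then show ?thesis
    unfolding eig_sum_def sum_list_map_eq_sum_of_nat_count
    by (simp add: assms order_prod_linear_factors)
qed

lemma sv_sum_eq_eig_sum: "sv_sum F A = eig_sum (\<lambda>\<mu>. F (sqrt (Re \<mu>))) (mat_adjoint A * A)"
  unfolding sv_sum_def eig_sum_def ..

lemma eigenvalue_list_pow:
  fixes A :: "complex mat"
  assumes A: "A \<in> carrier_mat n n"
  obtains es where "length es = n"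
    and "\<And>k. char_poly (A ^\<^sub>m k) = (\<Prod>e\<leftarrow>es. [:- (e ^ k), 1:])"
    and "\<And>k. mat_trace (A ^\<^sub>m k) = (\<Sum>e\<leftarrow>es. e ^ k)"
proof -
  obtain es where cp: "char_poly A = (\<Prod>a\<leftarrow>es. [:- a, 1:])" and len: "length es = n"
    using char_poly_factorized[OF A] by blast
  obtain B P Q where "schur_decomposition A es = (B,P,Q)"
    by (cases "schur_decomposition A es") auto
  from schur_decomposition[OF A cp this] have wit: "similar_mat_wit A B P Q"
    and ut: "upper_triangular B" and dg: "diag_mat B = es" by auto
  from similar_mat_witD2[OF A wit] have B: "B \<in> carrier_mat n n" and P: "P \<in> carrier_mat n n"
    and Q: "Q \<in> carrier_mat n n" and QP: "Q * P = 1\<^sub>m n" by auto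
  have Bk: "B ^\<^sub>m k \<in> carrier_mat n n" for k
    using B by simp
  have diag_Bk: "(B ^\<^sub>m k) $$ (i,i) = es ! i ^ k" if "i < n" for i k
    using upper_triangular_pow[OF B ut] that B dg by (auto simp: diag_mat_def)
  have "char_poly (A ^\<^sub>m k) = (\<Prod>e\<leftarrow>es. [:- (e ^ k), 1:])" for k
  proof -
    have "char_poly (A ^\<^sub>m k) = char_poly (B ^\<^sub>m k)"
      using similar_mat_wit_pow[OF wit] by (intro char_poly_similar) (auto simp: similar_mat_def)
    also have "\<dots> = (\<Prod>a\<leftarrow>diag_mat (B ^\<^sub>m k). [:- a, 1:])"
      using upper_triangular_pow[OF B ut] by (intro char_poly_upper_triangular[OF Bk]) auto
    also have "diag_mat (B ^\<^sub>m k) = map (\<lambda>e. e ^ k) es"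
      using B Bk diag_Bk len by (intro nth_equalityI) (auto simp: diag_mat_def)
    finally show ?thesis by (simp add: o_def)
  qed
  moreover have "mat_trace (A ^\<^sub>m k) = (\<Sum>e\<leftarrow>es. e ^ k)" for k
  proof -
    have "mat_trace (A ^\<^sub>m k) = mat_trace (P * (B ^\<^sub>m k * Q))"
      using similar_mat_wit_pow_id[OF wit] P Bk Q by (simp add: assoc_mult_mat[of _ n n _ n _ n])
    also have "\<dots> = mat_trace ((B ^\<^sub>m k * Q) * P)"
      using P Bk[of k] Q by (intro mat_trace_mult_comm[of _ n]) auto
    also have "\<dots> = mat_trace (B ^\<^sub>m k)"
      using P Bk[of k] Q QP by (simp add: assoc_mult_mat[of _ n n _ n _ n] right_mult_one_mat[OF Bk])
    also have "\<dots> = (\<Sum>i<n. es ! i ^ k)"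
      unfolding mat_trace_def using B Bk diag_Bk by simp
    finally show ?thesis
      using len by (simp add: sum_list_sum_nth atLeast0LessThan)
  qed
  ultimately show ?thesis using len that by blast
qed

lemma char_poly_root_eigenvector:
  fixes A :: "complex mat"
  assumes A: "A \<in> carrier_mat n n" and root: "poly (char_poly A) \<mu> = 0"
  obtains i0 and v :: "complex vec" where "i0 < n" "v $ i0 \<noteq> 0"
    and "\<And>i. i < n \<Longrightarrow> (\<Sum>j<n. A $$ (i,j) * v $ j) = \<mu> * v $ i"
proof -
  from root eigenvalue_root_char_poly[OF A] obtain v where "eigenvector A v \<mu>"
    unfolding eigenvalue_def by auto
  then have v: "v \<in> carrier_vec n" and nz: "v \<noteq> 0\<^sub>v n" and Av: "A *\<^sub>v v = \<mu> \<cdot>\<^sub>v v"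
    unfolding eigenvector_def using A by auto
  have "\<exists>i0<n. v $ i0 \<noteq> 0"
  proof (rule ccontr)
    assume "\<not> (\<exists>i0<n. v $ i0 \<noteq> 0)"
    then have "v = 0\<^sub>v n" using v by (intro eq_vecI) auto
    with nz show False by simp
  qed
  then obtain i0 where "i0 < n" "v $ i0 \<noteq> 0" by blast
  moreover have "(\<Sum>j<n. A $$ (i,j) * v $ j) = \<mu> * v $ i" if "i < n" for i
    using arg_cong[OF Av, of "\<lambda>w. w $ i"] that A v by (simp add: scalar_prod_def atLeast0LessThan)
  ultimately show ?thesis using that by blast
qed

lemma char_poly_root_norm_le_row_sum:
  fixes A :: "complex mat"
  assumes A: "A \<in> carrier_mat n n" and root: "poly (char_poly A) \<mu> = 0"
    and R: "\<And>i. i < n \<Longrightarrow> (\<Sum>j<n. cmod (A $$ (i,j))) \<le> R"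
  shows "cmod \<mu> \<le> R"
proof -
  obtain i0 and v :: "complex vec" where "i0 < n" "v $ i0 \<noteq> 0"
    and ev: "\<And>i. i < n \<Longrightarrow> (\<Sum>j<n. A $$ (i,j) * v $ j) = \<mu> * v $ i"
    using char_poly_root_eigenvector[OF A root] by blast
  define m where "m = Max ((\<lambda>j. cmod (v $ j)) ` {..<n})"
  have le: "cmod (v $ j) \<le> m" if "j < n" for j
    unfolding m_def using that by (intro Max_ge) auto
  have "m \<in> (\<lambda>j. cmod (v $ j)) ` {..<n}"
    unfolding m_def using \<open>i0 < n\<close> by (intro Max_in) auto
  then obtain i where i: "i < n" and mi: "m = cmod (v $ i)"
    by auto
  have mpos: "m > 0"
    using le[OF \<open>i0 < n\<close>] \<open>v $ i0 \<noteq> 0\<close> by (meson less_le_trans zero_less_norm_iff)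
  have "cmod \<mu> * m = cmod (\<Sum>j<n. A $$ (i,j) * v $ j)"
    using ev[OF i] mi by (simp add: norm_mult)
  also have "\<dots> \<le> (\<Sum>j<n. cmod (A $$ (i,j)) * m)"
    by (rule order_trans[OF norm_sum]) (auto simp: norm_mult intro!: sum_mono mult_left_mono le)
  also have "\<dots> \<le> R * m"
    using R[OF i] mpos by (simp add: sum_distrib_right[symmetric])
  finally show ?thesis using mpos by simp
qed

lemma hermitian_char_poly_root_real:
  fixes A :: "complex mat"
  assumes A: "A \<in> carrier_mat n n" and root: "poly (char_poly A) \<mu> = 0"
    and herm: "mat_adjoint A = A"
  shows "\<mu> \<in> \<real>"
proof -
  obtain i0 and v :: "complex vec" where "i0 < n" "v $ i0 \<noteq> 0"
    and ev: "\<And>i. i < n \<Longrightarrow> (\<Sum>j<n. A $$ (i,j) * v $ j) = \<mu> * v $ i"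
    using char_poly_root_eigenvector[OF A root] by blast
  have H: "cnj (A $$ (i,j)) = A $$ (j,i)" if "i < n" "j < n" for i j
    using arg_cong[OF herm, of "\<lambda>M. M $$ (j,i)"] A that by (simp add: mat_adjoint_def mat_of_rows_index)
  define s where "s = (\<Sum>i<n. \<Sum>j<n. cnj (v $ i) * A $$ (i,j) * v $ j)"
  define S where "S = (\<Sum>i<n. (cmod (v $ i))\<^sup>2)"
  \<comment> \<open>the quadratic form \<open>v\<^sup>* A v\<close> equals \<open>\<mu> |v|\<^sup>2\<close> and is real\<close>
  have "s = (\<Sum>i<n. cnj (v $ i) * (\<Sum>j<n. A $$ (i,j) * v $ j))"
    unfolding s_def by (simp add: sum_distrib_left mult.assoc)
  also have "\<dots> = (\<Sum>i<n. \<mu> * (cnj (v $ i) * v $ i))"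
    by (intro sum.cong) (auto simp: ev)
  also have "\<dots> = \<mu> * of_real S"
    unfolding S_def by (simp add: sum_distrib_left of_real_sum mult.commute mult.left_commute
        flip: complex_norm_square of_real_power)
  finally have s_eq: "s = \<mu> * of_real S" .
  have "cnj s = (\<Sum>i<n. \<Sum>j<n. v $ i * A $$ (j,i) * cnj (v $ j))"
    unfolding s_def cnj_sum by (intro sum.cong refl) (simp add: H)
  also have "\<dots> = s"
    unfolding s_def by (subst sum.swap) (simp add: mult.commute mult.left_commute)
  finally have "s \<in> \<real>"
    by (simp add: Reals_cnj_iff)
  moreover have "S > 0"
    unfolding S_def using \<open>i0 < n\<close> \<open>v $ i0 \<noteq> 0\<close>
    by (intro sum_pos2[of _ i0]) auto
  ultimately have "\<mu> = s / of_real S" "s \<in> \<real>"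
    by (simp_all add: s_eq)
  then show ?thesis
    by (simp add: Reals_divide)
qed

lemma hermitian_eigenvalue_list:
  fixes A :: "complex mat"
  assumes A: "A \<in> carrier_mat n n" and herm: "mat_adjoint A = A"
  obtains es where "length es = n"
    and "\<And>e. e \<in> set es \<Longrightarrow> poly (char_poly A) e = 0 \<and> e \<in> \<real>"
    and "\<And>F. eig_sum F A = (\<Sum>e\<leftarrow>es. F e)"
    and "\<And>F. sv_sum F A = (\<Sum>e\<leftarrow>es. F (cmod e))"
    and "\<And>k. mat_trace (A ^\<^sub>m k) = (\<Sum>e\<leftarrow>es. e ^ k)"
proof -
  obtain es where len: "length es = n"
    and cp: "\<And>k. char_poly (A ^\<^sub>m k) = (\<Prod>e\<leftarrow>es. [:- (e ^ k), 1:])"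
    and tr: "\<And>k. mat_trace (A ^\<^sub>m k) = (\<Sum>e\<leftarrow>es. e ^ k)"
    using eigenvalue_list_pow[OF A] by blast
  have cp1: "char_poly A = (\<Prod>e\<leftarrow>es. [:- e, 1:])"
    using cp[of 1] A by simp
  have cp2: "char_poly (mat_adjoint A * A) = (\<Prod>e\<leftarrow>map (\<lambda>e. e ^ 2) es. [:- e, 1:])"
    using cp[of 2] A herm by (simp add: numeral_2_eq_2 o_def)
  have spec: "poly (char_poly A) e = 0 \<and> e \<in> \<real>" if "e \<in> set es" for e
  proof
    show root: "poly (char_poly A) e = 0"
      unfolding cp1 using that by (rule linear_poly_root)
    show "e \<in> \<real>"
      by (rule hermitian_char_poly_root_real[OF A root herm])
  qed
  have "sv_sum F A = (\<Sum>e\<leftarrow>es. F (cmod e))" for F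
  proof -
    have "F (sqrt (Re (e ^ 2))) = F (cmod e)" if "e \<in> set es" for e
      using spec[OF that] by (auto elim!: Reals_cases simp: power2_eq_square)
    then show ?thesis
      unfolding sv_sum_eq_eig_sum eig_sum_linear_factors[OF cp2]
      by (simp add: o_def cong: map_cong)
  qed
  with that len spec eig_sum_linear_factors[OF cp1] tr show ?thesis
    by blast
qed

lemma mat_adjoint_of_real_symmetric:
  assumes "A \<in> carrier_mat n n" "\<And>i j. i < n \<Longrightarrow> j < n \<Longrightarrow> A $$ (j,i) = A $$ (i,j)"
  shows "mat_adjoint (map_mat complex_of_real A) = map_mat complex_of_real A"
  using assms by (intro eq_matI) (auto simp: mat_adjoint_def mat_of_rows_index)

lemma row_sum_adjoint_mult_le:
  fixes Z :: "complex mat"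
  assumes Z: "Z \<in> carrier_mat n n" and i: "i < n"
    and R: "\<And>l. l < n \<Longrightarrow> (\<Sum>j<n. cmod (Z $$ (l,j))) \<le> R"
    and C: "(\<Sum>l<n. cmod (Z $$ (l,i))) \<le> C" and "0 \<le> R"
  shows "(\<Sum>j<n. cmod ((mat_adjoint Z * Z) $$ (i,j))) \<le> R * C"
proof -
  have adj: "mat_adjoint Z \<in> carrier_mat n n"
    using Z unfolding carrier_mat_def mat_adjoint_def by auto
  have entry: "(mat_adjoint Z * Z) $$ (i,j) = (\<Sum>l<n. cnj (Z $$ (l,i)) * Z $$ (l,j))" if "j < n" for j
    using index_mult_mat_eq_sum[OF adj Z i that] Z i by (simp add: mat_adjoint_def mat_of_rows_index)
  have "(\<Sum>j<n. cmod ((mat_adjoint Z * Z) $$ (i,j))) \<le> (\<Sum>j<n. \<Sum>l<n. cmod (Z $$ (l,i)) * cmod (Z $$ (l,j)))"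
    by (intro sum_mono) (auto simp: entry norm_mult intro: order_trans[OF norm_sum])
  also have "\<dots> = (\<Sum>l<n. cmod (Z $$ (l,i)) * (\<Sum>j<n. cmod (Z $$ (l,j))))"
    by (subst sum.swap) (simp add: sum_distrib_left)
  also have "\<dots> \<le> (\<Sum>l<n. cmod (Z $$ (l,i)) * R)"
    by (intro sum_mono mult_left_mono R) auto
  also have "\<dots> \<le> C * R"
    using C \<open>0 \<le> R\<close> by (simp add: sum_distrib_right[symmetric] mult_right_mono)
  finally show ?thesis by (simp add: mult.commute)
qed

text \<open>Schur test: \<open>\<parallel>Z\<parallel>\<^sup>2 = \<rho>(Z\<^sup>* Z)\<close> is bounded by the maximal row sum of \<open>Z\<^sup>* Z\<close>.\<close>
lemma spec_norm_le_schur_test: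
  fixes Z :: "complex mat"
  assumes Z: "Z \<in> carrier_mat n n"
    and R: "\<And>i. i < n \<Longrightarrow> (\<Sum>j<n. cmod (Z $$ (i,j))) \<le> R"
    and C: "\<And>j. j < n \<Longrightarrow> (\<Sum>i<n. cmod (Z $$ (i,j))) \<le> C" and "0 \<le> R" "0 \<le> C"
  shows "spec_norm Z \<le> sqrt (R * C)"
proof -
  let ?M = "mat_adjoint Z * Z"
  have M: "?M \<in> carrier_mat n n"
    using Z unfolding carrier_mat_def mat_adjoint_def by auto
  have "char_poly ?M \<noteq> 0"
    using degree_monic_char_poly[OF M] by auto
  then have fin: "finite {\<mu>. poly (char_poly ?M) \<mu> = 0}"
    by (rule poly_roots_finite)
  have "sqrt (Re \<mu>) \<le> sqrt (R * C)" if "poly (char_poly ?M) \<mu> = 0" for \<mu>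
  proof -
    have "cmod \<mu> \<le> R * C"
      using char_poly_root_norm_le_row_sum[OF M that] row_sum_adjoint_mult_le[OF Z _ R C] \<open>0 \<le> R\<close>
      by blast
    then show ?thesis
      using complex_Re_le_cmod[of \<mu>] by simp
  qed
  moreover have "{sqrt (Re \<mu>) |\<mu>. poly (char_poly ?M) \<mu> = 0} = (\<lambda>\<mu>. sqrt (Re \<mu>)) ` {\<mu>. poly (char_poly ?M) \<mu> = 0}"
    by auto
  ultimately show ?thesis
    unfolding spec_norm_def using fin \<open>0 \<le> R\<close> \<open>0 \<le> C\<close> by (subst Max_le_iff) auto
qed

lemma sum_tridiagonal_band_le:
  fixes \<eta> :: real and i n :: nat
  assumes "0 \<le> \<eta>"
  shows "(\<Sum>j<n. if j = i \<or> j = i + 1 \<or> i = j + 1 then \<eta> else 0) \<le> 3 * \<eta>"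
proof -
  have "card {j\<in>{..<n}. j = i \<or> j = i + 1 \<or> i = j + 1} \<le> card {i, i + 1, i - 1}"
    by (intro card_mono) auto
  also have "\<dots> \<le> 3"
    by (simp add: card_insert_if)
  finally show ?thesis
    using assms by (simp add: sum.inter_filter[symmetric] mult_right_mono)
qed

lemma spec_norm_tridiagonal_le:
  fixes Z :: "complex mat"
  assumes Z: "Z \<in> carrier_mat n n" and "0 \<le> \<eta>"
    and bound: "\<And>i j. i < n \<Longrightarrow> j < n \<Longrightarrow> cmod (Z $$ (i,j)) \<le> \<eta>"
    and tridiagonal: "\<And>i j. i < n \<Longrightarrow> j < n \<Longrightarrow> j \<noteq> i \<Longrightarrow> j \<noteq> i + 1 \<Longrightarrow> i \<noteq> j + 1 \<Longrightarrow> Z $$ (i,j) = 0"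
  shows "spec_norm Z \<le> 3 * \<eta>"
proof -
  have entry: "cmod (Z $$ (i,j)) \<le> (if j = i \<or> j = i + 1 \<or> i = j + 1 then \<eta> else 0)" if "i < n" "j < n" for i j
    using bound[OF that] tridiagonal[OF that] by auto
  have "spec_norm Z \<le> sqrt ((3 * \<eta>) * (3 * \<eta>))"
  proof (rule spec_norm_le_schur_test[OF Z])
    show "(\<Sum>j<n. cmod (Z $$ (i,j))) \<le> 3 * \<eta>" if "i < n" for i
    proof -
      have "(\<Sum>j<n. cmod (Z $$ (i,j))) \<le> (\<Sum>j<n. if j = i \<or> j = i + 1 \<or> i = j + 1 then \<eta> else 0)"
        using that by (intro sum_mono entry) auto
      then show ?thesis
        using sum_tridiagonal_band_le[OF \<open>0 \<le> \<eta>\<close>, of i n] by linarith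
    qed
    show "(\<Sum>i<n. cmod (Z $$ (i,j))) \<le> 3 * \<eta>" if "j < n" for j
    proof -
      have "(\<Sum>i<n. cmod (Z $$ (i,j))) \<le> (\<Sum>i<n. if i = j \<or> i = j + 1 \<or> j = i + 1 then \<eta> else 0)"
      proof (rule sum_mono)
        fix i assume "i \<in> {..<n}"
        then show "cmod (Z $$ (i,j)) \<le> (if i = j \<or> i = j + 1 \<or> j = i + 1 then \<eta> else 0)"
          using entry[of i j] that by (cases "i = j \<or> i = j + 1 \<or> j = i + 1") auto
      qed
      then show ?thesis
        using sum_tridiagonal_band_le[OF \<open>0 \<le> \<eta>\<close>, of j n] by linarith
    qed
  qed (use \<open>0 \<le> \<eta>\<close> in auto)
  also have "\<dots> = 3 * \<eta>"
    using \<open>0 \<le> \<eta>\<close> by (simp add: real_sqrt_mult)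
  finally show ?thesis .
qed

section \<open>Fourier coefficients of powers of a cosine polynomial\<close>

lemma has_vector_derivative_cis_multiple:
  fixes m :: int
  assumes "m \<noteq> 0"
  shows "((\<lambda>t. cis (of_int m * t) / (\<i> * of_int m)) has_vector_derivative cis (of_int m * t)) (at t within S)"
proof -
  have "((\<lambda>z. exp (\<i> * m * z) / (\<i> * m)) has_field_derivative exp (\<i> * m * t) * (\<i> * m) / (\<i> * m))
      (at (complex_of_real t))"
    by (auto intro!: derivative_eq_intros)
  from has_vector_derivative_real_field[OF this, of S] show ?thesis
    using assms by (simp add: cis_conv_exp mult.assoc)
qed

lemma integral_cis_multiple:
  "integral {-pi..pi} (\<lambda>t. cis (of_int m * t)) = (if m = 0 then 2 * pi else 0)"
proof (cases "m = 0")
  case True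
  then show ?thesis by (simp add: scaleR_conv_of_real)
next
  case False
  have "((\<lambda>t. cis (of_int m * t)) has_integral
      cis (of_int m * pi) / (\<i> * of_int m) - cis (of_int m * (-pi)) / (\<i> * of_int m)) {-pi..pi}"
    using False by (intro fundamental_theorem_of_calculus has_vector_derivative_cis_multiple) auto
  moreover have "cis (of_int m * pi) = cis (of_int m * (-pi))"
    using cis_multiple_2pi[of "of_int m"] cis_mult[of "of_int m * (-pi)" "2 * pi * of_int m"]
    by (simp add: algebra_simps)
  ultimately show ?thesis
    using False by (simp add: integral_unique)
qed

text \<open>\<open>cos_power_coeff a c k j\<close> is the coefficient of \<open>z\<^sup>j\<close> in the Laurent polynomial
  \<open>(a + c z + c z\<^sup>-\<^sup>1)\<^sup>k\<close>, i.e. the \<open>j\<close>-th Fourier coefficient of \<open>(a + 2 c cos \<theta>)\<^sup>k\<close>.\<close>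
fun cos_power_coeff :: "real \<Rightarrow> real \<Rightarrow> nat \<Rightarrow> int \<Rightarrow> real" where
  "cos_power_coeff a c 0 j = (if j = 0 then 1 else 0)"
| "cos_power_coeff a c (Suc k) j =
     a * cos_power_coeff a c k j + c * cos_power_coeff a c k (j - 1) + c * cos_power_coeff a c k (j + 1)"

lemma integral_cos_power_cis:
  "integral {-pi..pi} (\<lambda>t. complex_of_real (a + 2 * c * cos t) ^ k * cis (- (of_int j * t)))
     = 2 * pi * cos_power_coeff a c k j"
proof (induction k arbitrary: j)
  case 0
  then show ?case
    using integral_cis_multiple[of "- j"] by simp
next
  case (Suc k)
  let ?X = "\<lambda>t. complex_of_real (a + 2 * c * cos t) ^ k"
  let ?I = "\<lambda>j. integral {-pi..pi} (\<lambda>t. ?X t * cis (- (of_int j * t)))"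
  have has_int: "((\<lambda>t. ?X t * cis (- (of_int j * t))) has_integral ?I j) {-pi..pi}" for j
    by (intro integrable_integral integrable_continuous_interval continuous_intros)
  have shift: "complex_of_real (a + 2 * c * cos t) ^ Suc k * cis (- (of_int j * t)) =
      a * (?X t * cis (- (of_int j * t))) + c * (?X t * cis (- (of_int (j - 1) * t)))
        + c * (?X t * cis (- (of_int (j + 1) * t)))" for t
  proof -
    have "complex_of_real (a + 2 * c * cos t) = a + c * (cis t + cis (- t))"
      by (simp add: complex_eq_iff)
    then have cos_cis: "complex_of_real (a + 2 * c * cos t) * cis (- (of_int j * t))
        = a * cis (- (of_int j * t)) + c * cis (- (of_int (j - 1) * t)) + c * cis (- (of_int (j + 1) * t))"
      by (simp add: algebra_simps cis_mult)
    have "complex_of_real (a + 2 * c * cos t) ^ Suc k * cis (- (of_int j * t))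
        = ?X t * (complex_of_real (a + 2 * c * cos t) * cis (- (of_int j * t)))"
      by (simp add: algebra_simps)
    also have "\<dots> = ?X t * (a * cis (- (of_int j * t)) + c * cis (- (of_int (j - 1) * t))
        + c * cis (- (of_int (j + 1) * t)))"
      unfolding cos_cis ..
    finally show ?thesis
      by (simp add: algebra_simps)
  qed
  have "integral {-pi..pi} (\<lambda>t. complex_of_real (a + 2 * c * cos t) ^ Suc k * cis (- (of_int j * t)))
      = a * ?I j + c * ?I (j - 1) + c * ?I (j + 1)"
    unfolding shift by (intro integral_unique has_integral_add has_integral_mult_right has_int)
  also have "\<dots> = a * (2 * pi * cos_power_coeff a c k j) + c * (2 * pi * cos_power_coeff a c k (j - 1))
      + c * (2 * pi * cos_power_coeff a c k (j + 1))"
    unfolding Suc.IH by simp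
  finally show ?case
    by (simp add: algebra_simps)
qed

lemma cos_power_coeff_eq_0: "k < \<bar>j\<bar> \<Longrightarrow> cos_power_coeff a c k j = 0"
  by (induction k arbitrary: j) auto

lemma abs_cos_power_coeff_le:
  assumes "\<bar>a\<bar> \<le> K" "\<bar>c\<bar> \<le> K"
  shows "\<bar>cos_power_coeff a c k j\<bar> \<le> (3 * K) ^ k"
proof (induction k arbitrary: j)
  case 0
  then show ?case by simp
next
  case (Suc k)
  have "\<bar>cos_power_coeff a c (Suc k) j\<bar> \<le> \<bar>a\<bar> * \<bar>cos_power_coeff a c k j\<bar>
      + \<bar>c\<bar> * \<bar>cos_power_coeff a c k (j - 1)\<bar> + \<bar>c\<bar> * \<bar>cos_power_coeff a c k (j + 1)\<bar>"
    by (simp add: abs_mult[symmetric] abs_triangle_ineq[THEN order_trans] add_mono)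
  also have "\<dots> \<le> K * (3 * K) ^ k + K * (3 * K) ^ k + K * (3 * K) ^ k"
    using assms Suc by (intro add_mono mult_mono) auto
  finally show ?case by (simp add: mult_ac)
qed

lemma continuous_on_cos_power_coeff:
  assumes "continuous_on S a" "continuous_on S c"
  shows "continuous_on S (\<lambda>x. cos_power_coeff (a x) (c x) k j)"
  by (induction k arbitrary: j) (auto intro!: continuous_intros assms)

definition tridiag_mat :: "nat \<Rightarrow> (nat \<Rightarrow> real) \<Rightarrow> (nat \<Rightarrow> real) \<Rightarrow> real mat" where
  "tridiag_mat n d e = mat n n (\<lambda>(i, j).
     if i = j then d j else if i + 1 = j then e i else if i = j + 1 then e j else 0)"

lemma tridiag_mat_carrier: "tridiag_mat n d e \<in> carrier_mat n n"
  unfolding tridiag_mat_def by simp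

lemma dim_tridiag_mat [simp]:
  "dim_row (tridiag_mat n d e) = n" "dim_col (tridiag_mat n d e) = n"
  unfolding tridiag_mat_def by simp_all

lemma tridiag_mat_pow_Suc_index:
  fixes n :: nat and d e :: "nat \<Rightarrow> real"
  assumes "i < n" "l < n"
  defines "T \<equiv> \<lambda>k. tridiag_mat n d e ^\<^sub>m k"
  shows "T (Suc k) $$ (i,l) = T k $$ (i,l) * d l
      + (if 0 < l then T k $$ (i,l-1) * e (l-1) else 0)
      + (if l + 1 < n then T k $$ (i,l+1) * e l else 0)"
proof -
  have "T (Suc k) $$ (i,l) = (T k * tridiag_mat n d e) $$ (i,l)"
    by (simp add: T_def)
  also have "\<dots> = (\<Sum>m<n. T k $$ (i,m) * tridiag_mat n d e $$ (m,l))"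
    by (rule index_mult_mat_eq_sum) (use assms tridiag_mat_carrier in \<open>auto simp: T_def\<close>)
  also have "\<dots> = (\<Sum>m<n. (if m = l then T k $$ (i,l) * d l else 0)
      + (if m = l - 1 \<and> 0 < l then T k $$ (i,l-1) * e (l-1) else 0)
      + (if m = l + 1 then T k $$ (i,l+1) * e l else 0))"
    using assms by (intro sum.cong) (auto simp: tridiag_mat_def)
  also have "\<dots> = T k $$ (i,l) * d l + (if 0 < l then T k $$ (i,l-1) * e (l-1) else 0)
      + (if l + 1 < n then T k $$ (i,l+1) * e l else 0)"
    using assms by (simp add: sum.distrib sum.delta' conj_commute)
  finally show ?thesis .
qed

lemma abs_tridiag_mat_pow_le:
  assumes "i < n" "l < n" and K: "0 \<le> K" and de: "\<And>j. j < n \<Longrightarrow> \<bar>d j\<bar> \<le> K \<and> \<bar>e j\<bar> \<le> K"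
  shows "\<bar>(tridiag_mat n d e ^\<^sub>m k) $$ (i,l)\<bar> \<le> (3 * K) ^ k"
  using assms(2)
proof (induction k arbitrary: l)
  case 0
  then show ?case using assms(1) by simp
next
  case (Suc k)
  let ?T = "tridiag_mat n d e ^\<^sub>m k"
  have "\<bar>?T $$ (i,l) * d l\<bar> \<le> (3 * K) ^ k * K"
    unfolding abs_mult using Suc de K by (intro mult_mono) auto
  moreover have "\<bar>if 0 < l then ?T $$ (i,l-1) * e (l-1) else 0\<bar> \<le> (3 * K) ^ k * K"
    using Suc de[of "l-1"] K by (auto simp: abs_mult intro!: mult_mono)
  moreover have "\<bar>if l + 1 < n then ?T $$ (i,l+1) * e l else 0\<bar> \<le> (3 * K) ^ k * K"
    using Suc.IH[of "l+1"] de[of l] K Suc.prems by (auto simp: abs_mult intro!: mult_mono)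
  ultimately have "\<bar>(tridiag_mat n d e ^\<^sub>m Suc k) $$ (i,l)\<bar> \<le> 3 * ((3 * K) ^ k * K)"
    unfolding tridiag_mat_pow_Suc_index[OF assms(1) Suc.prems] by linarith
  then show ?case by (simp add: mult_ac)
qed

lemma tridiag_mat_symmetric: "i < n \<Longrightarrow> j < n \<Longrightarrow> tridiag_mat n d e $$ (j,i) = tridiag_mat n d e $$ (i,j)"
  by (auto simp: tridiag_mat_def)

lemma row_sum_tridiag_mat_le:
  assumes i: "i < n" and de: "\<And>j. j < n \<Longrightarrow> \<bar>d j\<bar> \<le> D \<and> \<bar>e j\<bar> \<le> E" and "0 \<le> E"
  shows "(\<Sum>j<n. \<bar>tridiag_mat n d e $$ (i,j)\<bar>) \<le> D + 2 * E"
proof -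
  have "(\<Sum>j<n. \<bar>tridiag_mat n d e $$ (i,j)\<bar>) = (\<Sum>j<n. (if j = i then \<bar>d i\<bar> else 0)
      + (if j = i + 1 then \<bar>e i\<bar> else 0) + (if j = i - 1 \<and> 0 < i then \<bar>e (i - 1)\<bar> else 0))"
    using i by (intro sum.cong) (auto simp: tridiag_mat_def)
  also have "\<dots> = \<bar>d i\<bar> + (if i + 1 < n then \<bar>e i\<bar> else 0) + (if 0 < i then \<bar>e (i - 1)\<bar> else 0)"
    using i by (simp add: sum.distrib sum.delta' conj_commute)
  also have "\<dots> \<le> D + 2 * E"
    using de[OF i] de[of "i - 1"] i \<open>0 \<le> E\<close> by force
  finally show ?thesis .
qed

lemma abs_if_mult_diff_le:
  fixes x w q a :: real
  assumes "P \<Longrightarrow> \<bar>x - q\<bar> \<le> E" "P \<Longrightarrow> \<bar>w\<bar> \<le> K" "P \<Longrightarrow> q \<noteq> 0 \<Longrightarrow> \<bar>w - a\<bar> \<le> \<delta>"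
    and "\<not> P \<Longrightarrow> q = 0" "\<bar>q\<bar> \<le> Q" "0 \<le> \<delta>" "0 \<le> E" "0 \<le> K"
  shows "\<bar>(if P then x * w else 0) - a * q\<bar> \<le> K * E + Q * \<delta>"
proof (cases P)
  case True
  have "\<bar>x * w - a * q\<bar> = \<bar>(x - q) * w + q * (w - a)\<bar>"
    by (simp add: algebra_simps)
  also have "\<dots> \<le> \<bar>x - q\<bar> * \<bar>w\<bar> + \<bar>q\<bar> * \<bar>w - a\<bar>"
    by (metis abs_mult abs_triangle_ineq)
  also have "\<bar>x - q\<bar> * \<bar>w\<bar> \<le> E * K"
    using assms True by (intro mult_mono) auto
  also have "\<bar>q\<bar> * \<bar>w - a\<bar> \<le> Q * \<delta>"
    using assms True by (cases "q = 0") (auto intro: mult_mono)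
  finally show ?thesis
    using True by (simp add: mult.commute)
next
  case False
  then show ?thesis
    using assms by simp
qed

lemma tridiag_mat_pow_local_approx:
  assumes K: "1 \<le> K" and ac: "\<bar>a\<bar> \<le> K" "\<bar>c\<bar> \<le> K"
    and de: "\<And>j. j < n \<Longrightarrow> \<bar>d j\<bar> \<le> K \<and> \<bar>e j\<bar> \<le> K"
    and window: "\<And>j. j < n \<Longrightarrow> i \<le> j + r \<Longrightarrow> j \<le> i + r \<Longrightarrow> \<bar>d j - a\<bar> \<le> \<delta> \<and> \<bar>e j - c\<bar> \<le> \<delta>"
    and r: "r \<le> i" "i + r < n"
  shows "k \<le> r \<Longrightarrow> l < n \<Longrightarrow>
    \<bar>(tridiag_mat n d e ^\<^sub>m k) $$ (i,l) - cos_power_coeff a c k (int l - int i)\<bar> \<le> real k * (3 * K) ^ k * \<delta>"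
proof (induction k arbitrary: l)
  case 0
  then show ?case using r by simp
next
  case (Suc k)
  have "i < n" "0 \<le> \<delta>"
    using window[of i] r by (auto intro: order_trans[OF abs_ge_zero])
  define E where "E = real k * (3 * K) ^ k * \<delta>"
  define Q where "Q = (3 * K) ^ k"
  let ?T = "tridiag_mat n d e ^\<^sub>m k" and ?q = "cos_power_coeff a c k"
  have "0 \<le> E" "0 \<le> K" "\<And>j. \<bar>?q j\<bar> \<le> Q"
    using K \<open>0 \<le> \<delta>\<close> abs_cos_power_coeff_le[OF ac] by (auto simp: E_def Q_def)
  \<comment> \<open>one of the three terms of the recursion for the entries of \<open>T\<^sup>k\<^sup>+\<^sup>1\<close> and for \<open>cos_power_coeff\<close>\<close>
  have recursion_term: "\<bar>(if P then ?T $$ (i,m) * w else 0) - b * ?q j\<bar> \<le> K * E + Q * \<delta>"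
    if "P \<Longrightarrow> m < n \<and> j = int m - int i" "P \<Longrightarrow> \<bar>w\<bar> \<le> K" "P \<Longrightarrow> \<bar>j\<bar> \<le> int k \<Longrightarrow> \<bar>w - b\<bar> \<le> \<delta>"
      "\<not> P \<Longrightarrow> int k < \<bar>j\<bar>" for P m w b j
  proof (rule abs_if_mult_diff_le)
    show "P \<Longrightarrow> \<bar>?T $$ (i,m) - ?q j\<bar> \<le> E"
      using that(1) Suc.IH[of m] Suc.prems by (auto simp: E_def)
    show "P \<Longrightarrow> ?q j \<noteq> 0 \<Longrightarrow> \<bar>w - b\<bar> \<le> \<delta>"
      using that(3) cos_power_coeff_eq_0[of k j] by force
  qed (use that cos_power_coeff_eq_0 \<open>0 \<le> \<delta>\<close> \<open>0 \<le> E\<close> \<open>0 \<le> K\<close> \<open>\<And>j. \<bar>?q j\<bar> \<le> Q\<close> in auto)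
  have "\<bar>(if True then ?T $$ (i,l) * d l else 0) - a * ?q (int l - int i)\<bar> \<le> K * E + Q * \<delta>"
    by (rule recursion_term) (use de window Suc.prems in auto)
  moreover have "\<bar>(if 0 < l then ?T $$ (i,l-1) * e (l-1) else 0) - c * ?q (int l - int i - 1)\<bar> \<le> K * E + Q * \<delta>"
    by (rule recursion_term) (use de window Suc.prems r in auto)
  moreover have "\<bar>(if l + 1 < n then ?T $$ (i,l+1) * e l else 0) - c * ?q (int l - int i + 1)\<bar> \<le> K * E + Q * \<delta>"
    by (rule recursion_term) (use de window Suc.prems r in auto)
  ultimately have "\<bar>(tridiag_mat n d e ^\<^sub>m Suc k) $$ (i,l) - cos_power_coeff a c (Suc k) (int l - int i)\<bar>
      \<le> 3 * (K * E + Q * \<delta>)"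
    unfolding tridiag_mat_pow_Suc_index[OF \<open>i < n\<close> Suc.prems(2)] cos_power_coeff.simps
    by (simp add: abs_le_iff)
  also have "\<dots> \<le> real k * (3 * K) ^ Suc k * \<delta> + 3 * K * (Q * \<delta>)"
    using K \<open>0 \<le> \<delta>\<close> mult_right_mono[of 3 "3 * K" "Q * \<delta>"] by (simp add: E_def Q_def algebra_simps)
  also have "\<dots> = real (Suc k) * (3 * K) ^ Suc k * \<delta>"
    by (simp add: Q_def algebra_simps)
  finally show ?case .
qed

lemma norm_content_scaleR_minus_integral_le:
  fixes f :: "'a::euclidean_space \<Rightarrow> 'b::real_normed_vector"
  assumes "f integrable_on cbox u v" "0 \<le> \<epsilon>" "\<And>t. t \<in> cbox u v \<Longrightarrow> norm (y - f t) \<le> \<epsilon>"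
  shows "norm (Henstock_Kurzweil_Integration.content (cbox u v) *\<^sub>R y - integral (cbox u v) f)
    \<le> \<epsilon> * Henstock_Kurzweil_Integration.content (cbox u v)"
proof (rule has_integral_bound[OF assms(2) _ assms(3)])
  show "((\<lambda>t. y - f t) has_integral
      Henstock_Kurzweil_Integration.content (cbox u v) *\<^sub>R y - integral (cbox u v) f) (cbox u v)"
    by (intro has_integral_diff has_integral_const integrable_integral assms(1))
qed

lemma abs_length_mult_minus_integral_le:
  fixes f :: "real \<Rightarrow> real"
  assumes "continuous_on {a..b} f" "a \<le> b" "0 \<le> \<epsilon>" "\<And>t. t \<in> {a..b} \<Longrightarrow> \<bar>y - f t\<bar> \<le> \<epsilon>"
  shows "\<bar>(b - a) * y - integral {a..b} f\<bar> \<le> \<epsilon> * (b - a)"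
  using norm_content_scaleR_minus_integral_le[of f a b \<epsilon> y] assms integrable_continuous_interval
  by auto

lemma integral_unit_interval_sum_cells:
  fixes f :: "real \<Rightarrow> real"
  assumes "continuous_on {0..1} f" "0 < n"
  shows "integral {0..1} f = (\<Sum>i<n. integral {real i / real n..real (Suc i) / real n} f)"
proof -
  have "m \<le> n \<Longrightarrow> integral {0..real m / real n} f = (\<Sum>i<m. integral {real i / real n..real (Suc i) / real n} f)" for m
  proof (induction m)
    case 0
    then show ?case by simp
  next
    case (Suc m)
    have int: "f integrable_on {0..real (Suc m) / real n}"
      using Suc.prems by (intro integrable_continuous_interval continuous_on_subset[OF assms(1)]) auto
    have "integral {0..real m / real n} f + integral {real m / real n..real (Suc m) / real n} f
        = integral {0..real (Suc m) / real n} f"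
      by (rule Henstock_Kurzweil_Integration.integral_combine[OF _ _ int]) (auto simp: divide_right_mono)
    then show ?case
      using Suc by simp
  qed
  from this[of n] show ?thesis
    using assms(2) by simp
qed

lemma shifted_sample_mem:
  fixes N i :: nat
  assumes "1 \<le> N" "i < N + 1"
  shows "real (i + 1) / real N \<in> {0..2}"
  using assms by (simp add: field_simps)

lemma shifted_sample_close:
  fixes N i :: nat and t :: real
  assumes "1 \<le> N" "i < N + 1" "t \<in> {real i / real (N + 1)..real (i + 1) / real (N + 1)}"
  shows "t \<in> {0..1}" "\<bar>t - real (i + 1) / real N\<bar> \<le> 2 / real N"
proof -
  have N: "real N \<ge> 1" using assms(1) by simp
  have "0 \<le> real i / real (N + 1)" "real (i + 1) / real (N + 1) \<le> 1"
    using assms(2) by simp_all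
  then show "t \<in> {0..1}"
    using assms(3) unfolding atLeastAtMost_iff by linarith
  have "real (i + 1) / real (N + 1) \<le> real (i + 1) / real N"
    using N by (intro divide_left_mono) auto
  moreover have "real (i + 1) / real N - real i / real (N + 1) \<le> 2 / real N"
  proof -
    have "real (i + 1) / real N - real i / real (N + 1) = (real N + real i + 1) / (real N * real (N + 1))"
      using N by (simp add: field_simps)
    also have "\<dots> \<le> 2 * real (N + 1) / (real N * real (N + 1))"
      using assms(2) N by (intro divide_right_mono) auto
    also have "\<dots> = 2 / real N"
      by (rule nonzero_mult_divide_mult_cancel_right) simp
    finally show ?thesis .
  qed
  ultimately show "\<bar>t - real (i + 1) / real N\<bar> \<le> 2 / real N"
    using assms(3) by auto
qed

lemma abs_riemann_sum_shifted_minus_integral_le: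
  fixes f :: "real \<Rightarrow> real"
  assumes cont: "continuous_on {0..2} f" and "1 \<le> N" "0 \<le> \<epsilon>"
    and osc: "\<And>x y. x \<in> {0..2} \<Longrightarrow> y \<in> {0..2} \<Longrightarrow> \<bar>x - y\<bar> \<le> 2 / real N \<Longrightarrow> \<bar>f x - f y\<bar> \<le> \<epsilon>"
  shows "\<bar>(\<Sum>i<N+1. f (real (i+1) / real N)) / real (N+1) - integral {0..1} f\<bar> \<le> \<epsilon>"
proof -
  define n where "n = N + 1"
  have cell: "\<bar>f (real (i+1) / real N) / real n - integral {real i / real n..real (Suc i) / real n} f\<bar> \<le> \<epsilon> / real n"
    if i: "i < n" for i
  proof -
    have "\<bar>(real (Suc i) / real n - real i / real n) * f (real (i+1) / real N)
        - integral {real i / real n..real (Suc i) / real n} f\<bar> \<le> \<epsilon> * (real (Suc i) / real n - real i / real n)"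
    proof (rule abs_length_mult_minus_integral_le)
      have "0 \<le> real i / real n" "real (Suc i) / real n \<le> 2"
        using i by (simp_all add: n_def field_simps)
      then show "continuous_on {real i / real n..real (Suc i) / real n} f"
        by (intro continuous_on_subset[OF cont]) auto
      fix t assume "t \<in> {real i / real n..real (Suc i) / real n}"
      then show "\<bar>f (real (i+1) / real N) - f t\<bar> \<le> \<epsilon>"
        using shifted_sample_close[OF \<open>1 \<le> N\<close>, of i t] shifted_sample_mem[OF \<open>1 \<le> N\<close>, of i] i
          osc[of "real (i+1) / real N" t] by (auto simp: n_def abs_minus_commute)
    qed (use \<open>0 \<le> \<epsilon>\<close> in \<open>auto simp: divide_right_mono\<close>)
    then show ?thesis
      by (simp add: diff_divide_distrib[symmetric])
  qed
  have split: "integral {0..1} f = (\<Sum>i<n. integral {real i / real n..real (Suc i) / real n} f)"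
    using continuous_on_subset[OF cont] by (intro integral_unit_interval_sum_cells) (auto simp: n_def)
  have "\<bar>(\<Sum>i<n. f (real (i+1) / real N)) / real n - integral {0..1} f\<bar>
      = \<bar>\<Sum>i<n. f (real (i+1) / real N) / real n - integral {real i / real n..real (Suc i) / real n} f\<bar>"
    unfolding split by (simp add: sum_subtractf sum_divide_distrib)
  also have "\<dots> \<le> (\<Sum>i<n. \<epsilon> / real n)"
    by (rule order_trans[OF sum_abs]) (intro sum_mono cell, simp)
  also have "\<dots> = \<epsilon>"
    by (simp add: n_def del: of_nat_Suc)
  finally show ?thesis
    by (simp add: n_def)
qed

lemma riemann_sum_shifted_tendsto:
  fixes f :: "real \<Rightarrow> real"
  assumes cont: "continuous_on {0..2} f"
  shows "(\<lambda>N. (\<Sum>i<N+1. f (real (i+1) / real N)) / real (N+1)) \<longlonglongrightarrow> integral {0..1} f"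
proof (rule LIMSEQ_I)
  fix r :: real assume "0 < r"
  have "uniformly_continuous_on {0..2} f"
    by (intro compact_uniformly_continuous cont) auto
  then obtain \<eta> where "\<eta> > 0"
    and uc: "\<And>x y. x \<in> {0..2} \<Longrightarrow> y \<in> {0..2} \<Longrightarrow> dist y x < \<eta> \<Longrightarrow> dist (f y) (f x) < r / 2"
    unfolding uniformly_continuous_on_def using \<open>0 < r\<close> by (metis half_gt_zero)
  obtain N0 :: nat where N0: "2 / \<eta> < N0"
    using reals_Archimedean2 by blast
  have bound: "\<bar>(\<Sum>i<N+1. f (real (i+1) / real N)) / real (N+1) - integral {0..1} f\<bar> \<le> r / 2"
    if N: "N0 + 1 \<le> N" for N
  proof (rule abs_riemann_sum_shifted_minus_integral_le[OF cont])
    have "1 \<le> N" "2 / \<eta> < real N"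
      using N N0 by linarith+
    then have "2 / real N < \<eta>"
      using \<open>\<eta> > 0\<close> by (simp add: field_simps)
    then show "\<bar>f x - f y\<bar> \<le> r / 2" if "x \<in> {0..2}" "y \<in> {0..2}" "\<bar>x - y\<bar> \<le> 2 / real N" for x y
      using uc[of y x] that by (simp add: dist_real_def)
  qed (use N \<open>0 < r\<close> in auto)
  show "\<exists>no. \<forall>N\<ge>no. norm ((\<Sum>i<N+1. f (real (i+1) / real N)) / real (N+1) - integral {0..1} f) < r"
  proof (intro exI[of _ "N0 + 1"] allI impI)
    fix N assume "N0 + 1 \<le> N"
    then show "norm ((\<Sum>i<N+1. f (real (i+1) / real N)) / real (N+1) - integral {0..1} f) < r"
      using bound[of N] \<open>0 < r\<close> by simp
  qed
qed

lemma riemann_integrable01_continuous: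
  assumes cont: "continuous_on {0..1} a"
  shows "riemann_integrable01 a"
  unfolding riemann_integrable01_def
proof (rule exI[of _ "integral {0..1} a"], intro allI impI)
  fix \<epsilon> :: real assume "0 < \<epsilon>"
  have "uniformly_continuous_on {0..1} a"
    by (intro compact_uniformly_continuous cont) auto
  then obtain \<delta> where "\<delta> > 0"
    and uc: "\<And>x y. x \<in> {0..1} \<Longrightarrow> y \<in> {0..1} \<Longrightarrow> dist y x < \<delta> \<Longrightarrow> dist (a y) (a x) < \<epsilon> / 2"
    unfolding uniformly_continuous_on_def using \<open>0 < \<epsilon>\<close> by (metis half_gt_zero)
  have "norm ((\<Sum>(x, K)\<in>\<D>. Henstock_Kurzweil_Integration.content K *\<^sub>R a x) - integral {0..1} a) < \<epsilon>"
    if "\<D> tagged_division_of {0..1}" and fine: "(\<lambda>x. ball x \<delta>) fine \<D>" for \<D>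
  proof -
    have D: "\<D> tagged_division_of cbox 0 1"
      using that by simp
    have int: "a integrable_on cbox 0 1"
      using cont by (simp add: integrable_continuous_interval)
    have piece: "norm (Henstock_Kurzweil_Integration.content K *\<^sub>R a x - integral K a)
        \<le> \<epsilon> / 2 * Henstock_Kurzweil_Integration.content K" if xK: "(x, K) \<in> \<D>" for x K
    proof -
      obtain u v where K: "K = cbox u v"
        using tagged_division_ofD(4)[OF D xK] by blast
      have "x \<in> K" "K \<subseteq> cbox 0 1" "K \<subseteq> ball x \<delta>"
        using tagged_division_ofD(2,3)[OF D xK] fine xK unfolding fine_def by auto
      then show ?thesis
        unfolding K using \<open>0 < \<epsilon>\<close> uc[of x] integrable_on_subcbox[OF int]
        by (intro norm_content_scaleR_minus_integral_le)
          (auto simp: dist_norm norm_minus_commute less_imp_le)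
    qed
    have "norm ((\<Sum>(x, K)\<in>\<D>. Henstock_Kurzweil_Integration.content K *\<^sub>R a x) - integral {0..1} a)
        = norm (\<Sum>(x, K)\<in>\<D>. Henstock_Kurzweil_Integration.content K *\<^sub>R a x - integral K a)"
      using integral_combine_tagged_division_topdown[OF int D]
      by (simp add: sum_subtractf case_prod_unfold)
    also have "\<dots> \<le> (\<Sum>(x, K)\<in>\<D>. \<epsilon> / 2 * Henstock_Kurzweil_Integration.content K)"
      using piece by (intro order_trans[OF norm_sum] sum_mono) auto
    also have "\<dots> = \<epsilon> / 2 * (\<Sum>(x, K)\<in>\<D>. Henstock_Kurzweil_Integration.content K)"
      by (simp add: sum_distrib_left case_prod_unfold)
    also have "(\<Sum>(x, K)\<in>\<D>. Henstock_Kurzweil_Integration.content K) = 1"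
      using additive_content_tagged_division[OF D] by simp
    finally show ?thesis
      using \<open>0 < \<epsilon>\<close> by simp
  qed
  with \<open>\<delta> > 0\<close> show "\<exists>\<delta>>0. \<forall>\<D>. \<D> tagged_division_of {0..1} \<and> (\<lambda>x. ball x \<delta>) fine \<D> \<longrightarrow>
      norm ((\<Sum>(x, K)\<in>\<D>. Henstock_Kurzweil_Integration.content K *\<^sub>R a x) - integral {0..1} a) < \<epsilon>"
    by blast
qed

section \<open>Traces of powers of slowly varying tridiagonal matrices\<close>

lemma abs_sum_diff_le_split:
  fixes x y :: "nat \<Rightarrow> real"
  assumes good: "\<And>i. i < n \<Longrightarrow> \<not> P i \<Longrightarrow> \<bar>x i - y i\<bar> \<le> \<epsilon>"
    and bad: "\<And>i. i < n \<Longrightarrow> P i \<Longrightarrow> \<bar>x i - y i\<bar> \<le> C"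
    and card: "card {i\<in>{..<n}. P i} \<le> m" and "0 \<le> \<epsilon>" "0 \<le> C"
  shows "\<bar>(\<Sum>i<n. x i) - (\<Sum>i<n. y i)\<bar> \<le> real n * \<epsilon> + real m * C"
proof -
  have "\<bar>x i - y i\<bar> \<le> \<epsilon> + (if P i then C else 0)" if "i < n" for i
    using good[OF that] bad[OF that] \<open>0 \<le> \<epsilon>\<close> by (cases "P i") auto
  then have "\<bar>(\<Sum>i<n. x i) - (\<Sum>i<n. y i)\<bar> \<le> (\<Sum>i<n. \<epsilon> + (if P i then C else 0))"
    unfolding sum_subtractf[symmetric] by (intro order_trans[OF sum_abs] sum_mono) auto
  also have "\<dots> = real n * \<epsilon> + real (card {i\<in>{..<n}. P i}) * C"
    by (simp add: sum.distrib sum.inter_filter[symmetric])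
  also have "\<dots> \<le> real n * \<epsilon> + real m * C"
    using card \<open>0 \<le> C\<close> by (simp add: mult_right_mono)
  finally show ?thesis .
qed

lemma card_near_ends_le: "card {i\<in>{..<n}. i < k \<or> n \<le> i + k} \<le> 2 * k"
proof -
  have "card {i\<in>{..<n}. i < k \<or> n \<le> i + k} \<le> card ({..<k} \<union> {n - k..<n})"
    by (intro card_mono) auto
  also have "\<dots> \<le> 2 * k"
    using card_Un_le[of "{..<k}" "{n - k..<n}"] by simp
  finally show ?thesis .
qed

lemma abs_tridiag_trace_pow_minus_riemann_sum_le:
  fixes d e :: "nat \<Rightarrow> real" and a c :: "real \<Rightarrow> real"
  assumes "1 \<le> N" "1 \<le> K"
    and symbol_bound: "\<And>x. x \<in> {0..2} \<Longrightarrow> \<bar>a x\<bar> \<le> K \<and> \<bar>c x\<bar> \<le> K"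
    and entry_bound: "\<And>j. j < N + 1 \<Longrightarrow> \<bar>d j\<bar> \<le> K \<and> \<bar>e j\<bar> \<le> K"
    and local: "\<And>i j. i < N + 1 \<Longrightarrow> j < N + 1 \<Longrightarrow> i \<le> j + k \<Longrightarrow> j \<le> i + k \<Longrightarrow>
      \<bar>d j - a (real (i + 1) / real N)\<bar> \<le> \<delta> \<and> \<bar>e j - c (real (i + 1) / real N)\<bar> \<le> \<delta>"
  defines "q \<equiv> \<lambda>x. cos_power_coeff (a x) (c x) k 0"
  shows "\<bar>mat_trace (tridiag_mat (N + 1) d e ^\<^sub>m k) - (\<Sum>i<N + 1. q (real (i + 1) / real N))\<bar>
    \<le> real (N + 1) * (real k * (3 * K) ^ k * \<delta>) + real (2 * k) * (2 * (3 * K) ^ k)"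
proof -
  let ?T = "tridiag_mat (N + 1) d e ^\<^sub>m k"
  have ac: "\<bar>a (real (i + 1) / real N)\<bar> \<le> K" "\<bar>c (real (i + 1) / real N)\<bar> \<le> K" if "i < N + 1" for i
    using symbol_bound[OF shifted_sample_mem[OF \<open>1 \<le> N\<close> that]] by auto
  have "mat_trace ?T = (\<Sum>i<N + 1. ?T $$ (i,i))"
    by (simp add: mat_trace_def)
  also have "\<bar>(\<Sum>i<N + 1. ?T $$ (i,i)) - (\<Sum>i<N + 1. q (real (i + 1) / real N))\<bar>
      \<le> real (N + 1) * (real k * (3 * K) ^ k * \<delta>) + real (2 * k) * (2 * (3 * K) ^ k)"
  proof (rule abs_sum_diff_le_split[where P = "\<lambda>i. i < k \<or> N + 1 \<le> i + k"])
    fix i assume i: "i < N + 1" and interior: "\<not> (i < k \<or> N + 1 \<le> i + k)"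
    have "\<bar>?T $$ (i,i) - cos_power_coeff (a (real (i + 1) / real N)) (c (real (i + 1) / real N)) k (int i - int i)\<bar>
        \<le> real k * (3 * K) ^ k * \<delta>"
      by (rule tridiag_mat_pow_local_approx[OF \<open>1 \<le> K\<close> ac[OF i] entry_bound, where r = k])
        (use local[OF i] interior i in auto)
    then show "\<bar>?T $$ (i,i) - q (real (i + 1) / real N)\<bar> \<le> real k * (3 * K) ^ k * \<delta>"
      by (simp add: q_def)
  next
    fix i assume i: "i < N + 1"
    have "\<bar>?T $$ (i,i)\<bar> \<le> (3 * K) ^ k"
      by (rule abs_tridiag_mat_pow_le) (use i entry_bound \<open>1 \<le> K\<close> in auto)
    moreover have "\<bar>q (real (i + 1) / real N)\<bar> \<le> (3 * K) ^ k"
      unfolding q_def by (rule abs_cos_power_coeff_le) (use ac[OF i] in auto)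
    ultimately show "\<bar>?T $$ (i,i) - q (real (i + 1) / real N)\<bar> \<le> 2 * (3 * K) ^ k"
      by linarith
  qed (use card_near_ends_le[of "N + 1" k] \<open>1 \<le> K\<close> local[of 0 0] in \<open>auto intro: order_trans[OF abs_ge_zero]\<close>)
  finally show ?thesis .
qed

lemma tridiag_trace_pow_tendsto:
  fixes d e :: "nat \<Rightarrow> nat \<Rightarrow> real" and a c :: "real \<Rightarrow> real" and \<delta> :: "nat \<Rightarrow> real"
  assumes cont: "continuous_on {0..2} a" "continuous_on {0..2} c"
    and symbol_bound: "\<And>x. x \<in> {0..2} \<Longrightarrow> \<bar>a x\<bar> \<le> K \<and> \<bar>c x\<bar> \<le> K"
    and entry_bound: "\<And>N j. 1 \<le> N \<Longrightarrow> j < N + 1 \<Longrightarrow> \<bar>d N j\<bar> \<le> K \<and> \<bar>e N j\<bar> \<le> K"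
    and "\<delta> \<longlonglongrightarrow> 0"
    and local: "\<And>N i j. 1 \<le> N \<Longrightarrow> i < N + 1 \<Longrightarrow> j < N + 1 \<Longrightarrow> i \<le> j + k \<Longrightarrow> j \<le> i + k \<Longrightarrow>
      \<bar>d N j - a (real (i + 1) / real N)\<bar> \<le> \<delta> N \<and> \<bar>e N j - c (real (i + 1) / real N)\<bar> \<le> \<delta> N"
  shows "(\<lambda>N. mat_trace (tridiag_mat (N + 1) (d N) (e N) ^\<^sub>m k) / real (N + 1))
    \<longlonglongrightarrow> integral {0..1} (\<lambda>x. cos_power_coeff (a x) (c x) k 0)"
proof -
  define C where "C = (3 * max 1 K) ^ k"
  define q where "q = (\<lambda>x. cos_power_coeff (a x) (c x) k 0)"
  let ?S = "\<lambda>N. (\<Sum>i<N + 1. q (real (i + 1) / real N))"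
  let ?T = "\<lambda>N. tridiag_mat (N + 1) (d N) (e N) ^\<^sub>m k"
  have close: "\<bar>mat_trace (?T N) / real (N + 1) - ?S N / real (N + 1)\<bar>
      \<le> real k * C * \<delta> N + real (2 * k) * (2 * C) / real (N + 1)" if "1 \<le> N" for N
  proof -
    have "\<bar>mat_trace (?T N) / real (N + 1) - ?S N / real (N + 1)\<bar> = \<bar>mat_trace (?T N) - ?S N\<bar> / real (N + 1)"
      by (simp only: diff_divide_distrib[symmetric] abs_divide abs_of_nat)
    also have "\<dots> \<le> (real (N + 1) * (real k * C * \<delta> N) + real (2 * k) * (2 * C)) / real (N + 1)"
      unfolding C_def q_def using symbol_bound entry_bound[OF that] local[OF that]
      by (intro divide_right_mono abs_tridiag_trace_pow_minus_riemann_sum_le[OF that]) (auto simp: le_max_iff_disj)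
    also have "\<dots> = real k * C * \<delta> N + real (2 * k) * (2 * C) / real (N + 1)"
      by (simp only: add_divide_distrib nonzero_mult_div_cancel_left of_nat_eq_0_iff)
    finally show ?thesis .
  qed
  have "\<forall>\<^sub>F N in sequentially. norm (mat_trace (?T N) / real (N + 1) - ?S N / real (N + 1))
      \<le> real k * C * \<delta> N + real (2 * k) * (2 * C) / real (N + 1)"
    using eventually_ge_at_top[of 1] by eventually_elim (use close in simp)
  moreover have "(\<lambda>N. real k * C * \<delta> N + real (2 * k) * (2 * C) / real (N + 1)) \<longlonglongrightarrow> 0"
    using tendsto_add_zero[OF tendsto_mult_right_zero[OF \<open>\<delta> \<longlonglongrightarrow> 0\<close>]
        LIMSEQ_Suc[OF lim_const_over_n[of "real (2 * k) * (2 * C)"]]]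
    by simp
  ultimately have "(\<lambda>N. mat_trace (?T N) / real (N + 1) - ?S N / real (N + 1)) \<longlonglongrightarrow> 0"
    by (rule Lim_null_comparison)
  moreover have "(\<lambda>N. ?S N / real (N + 1)) \<longlonglongrightarrow> integral {0..1} q"
    unfolding q_def by (intro riemann_sum_shifted_tendsto continuous_on_cos_power_coeff cont)
  ultimately show ?thesis
    unfolding q_def by (rule Lim_transform[rotated])
qed

section \<open>From moments to spectral distributions\<close>

lemma tendsto_of_uniform_approximations:
  fixes a :: "nat \<Rightarrow> 'a::real_normed_vector"
  assumes approx: "\<And>\<epsilon>. 0 < \<epsilon> \<Longrightarrow> \<exists>b L'. b \<longlonglongrightarrow> L' \<and> norm (L' - L) \<le> \<epsilon> \<and>
      (\<forall>\<^sub>F N in sequentially. norm (a N - b N) \<le> \<epsilon>)"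
  shows "a \<longlonglongrightarrow> L"
proof (rule tendstoI)
  fix r :: real assume "0 < r"
  then obtain b L' where b: "b \<longlonglongrightarrow> L'" and L': "norm (L' - L) \<le> r / 4"
    and ab: "\<forall>\<^sub>F N in sequentially. norm (a N - b N) \<le> r / 4"
    using approx[of "r / 4"] by auto
  have "\<forall>\<^sub>F N in sequentially. dist (b N) L' < r / 4"
    using tendstoD[OF b, of "r / 4"] \<open>0 < r\<close> by simp
  with ab show "\<forall>\<^sub>F N in sequentially. dist (a N) L < r"
  proof eventually_elim
    case (elim N)
    have "dist (a N) L \<le> norm (a N - b N) + dist (b N) L' + norm (L' - L)"
      using norm_triangle_ineq4[of "a N - b N" "L' - b N"] norm_triangle_ineq[of "a N - L'" "L' - L"]
      by (simp add: dist_norm norm_minus_commute)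
    then show ?case
      using elim L' \<open>0 < r\<close> by linarith
  qed
qed

lemma complex_polynomial_approx_on_reals:
  fixes G :: "complex \<Rightarrow> complex" and S :: "real set"
  assumes "compact S" "continuous_on (complex_of_real ` S) G" "0 < \<epsilon>"
  obtains c :: "nat \<Rightarrow> complex" and D where
    "\<And>x. x \<in> S \<Longrightarrow> cmod (G (of_real x) - (\<Sum>j\<le>D. c j * of_real x ^ j)) \<le> \<epsilon>"
proof -
  have cont: "continuous_on S (\<lambda>x. G (of_real x))"
    by (rule continuous_on_compose2[OF assms(2)]) (auto intro: continuous_intros)
  obtain g1 where "real_polynomial_function g1" and g1: "\<And>x. x \<in> S \<Longrightarrow> \<bar>Re (G (of_real x)) - g1 x\<bar> < \<epsilon> / 2"
    using Stone_Weierstrass_real_polynomial_function[of S "\<lambda>x. Re (G (of_real x))" "\<epsilon> / 2"]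
      assms(1,3) continuous_on_Re[OF cont] by auto
  then obtain a1 n1 where a1: "g1 = (\<lambda>x. \<Sum>i\<le>n1. a1 i * x ^ i)"
    using real_polynomial_function_imp_sum by blast
  obtain g2 where "real_polynomial_function g2" and g2: "\<And>x. x \<in> S \<Longrightarrow> \<bar>Im (G (of_real x)) - g2 x\<bar> < \<epsilon> / 2"
    using Stone_Weierstrass_real_polynomial_function[of S "\<lambda>x. Im (G (of_real x))" "\<epsilon> / 2"]
      assms(1,3) continuous_on_Im[OF cont] by auto
  then obtain a2 n2 where a2: "g2 = (\<lambda>x. \<Sum>i\<le>n2. a2 i * x ^ i)"
    using real_polynomial_function_imp_sum by blast
  define D where "D = max n1 n2"
  define c where "c = (\<lambda>j. complex_of_real (if j \<le> n1 then a1 j else 0) + \<i> * complex_of_real (if j \<le> n2 then a2 j else 0))"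
  have pad: "(\<Sum>j\<le>D. (if j \<le> m then a j else 0) * x ^ j) = (\<Sum>j\<le>m. a j * x ^ j)"
    if "m \<le> D" for m and a :: "nat \<Rightarrow> real" and x :: real
    using that by (intro sum.mono_neutral_cong_right) auto
  have "(\<Sum>j\<le>D. c j * of_real x ^ j) = complex_of_real (g1 x) + \<i> * complex_of_real (g2 x)" for x
  proof -
    have "(\<Sum>j\<le>D. c j * of_real x ^ j)
        = complex_of_real (\<Sum>j\<le>D. (if j \<le> n1 then a1 j else 0) * x ^ j)
          + \<i> * complex_of_real (\<Sum>j\<le>D. (if j \<le> n2 then a2 j else 0) * x ^ j)"
      unfolding c_def by (simp add: algebra_simps sum.distrib sum_distrib_left of_real_sum)
    moreover have "(\<Sum>j\<le>D. (if j \<le> n1 then a1 j else 0) * x ^ j) = g1 x"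
      unfolding a1 by (rule pad) (simp add: D_def)
    moreover have "(\<Sum>j\<le>D. (if j \<le> n2 then a2 j else 0) * x ^ j) = g2 x"
      unfolding a2 by (rule pad) (simp add: D_def)
    ultimately show ?thesis
      by (simp only:)
  qed
  then have bound: "cmod (G (of_real x) - (\<Sum>j\<le>D. c j * of_real x ^ j))
      \<le> \<bar>Re (G (of_real x)) - g1 x\<bar> + \<bar>Im (G (of_real x)) - g2 x\<bar>" for x
    using cmod_le[of "G (of_real x) - (of_real (g1 x) + \<i> * of_real (g2 x))"] by simp
  show ?thesis
  proof (rule that)
    fix x assume "x \<in> S"
    then show "cmod (G (of_real x) - (\<Sum>j\<le>D. c j * of_real x ^ j)) \<le> \<epsilon>"
      using bound[of x] g1[OF \<open>x \<in> S\<close>] g2[OF \<open>x \<in> S\<close>] by linarith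
  qed
qed

lemma symD_eq_cbox: "symD = cbox (0, -pi) (1, pi)"
  unfolding symD_def cbox_Pair_eq by (simp only: cbox_interval)

lemma integrable_on_symD:
  fixes f :: "real \<times> real \<Rightarrow> 'a::banach"
  shows "continuous_on symD f \<Longrightarrow> f integrable_on symD"
  unfolding symD_eq_cbox by (rule Henstock_Kurzweil_Integration.integrable_continuous)

lemma norm_integral_symD_le:
  assumes "f integrable_on symD" "\<And>p. p \<in> symD \<Longrightarrow> norm (f p) \<le> b"
  shows "norm (integral symD f) \<le> b * (2 * pi)"
proof -
  have "(0, 0) \<in> symD"
    by (simp add: symD_def)
  then have "0 \<le> b"
    using assms(2) norm_ge_zero order_trans by blast
  moreover have "Henstock_Kurzweil_Integration.content (cbox (0::real, -pi) (1::real, pi)) = 2 * pi"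
    unfolding content_Pair by (simp add: cbox_interval)
  ultimately show ?thesis
    using has_integral_bound[OF _ integrable_integral[OF assms(1)[unfolded symD_eq_cbox]]] assms(2)
    unfolding symD_eq_cbox by metis
qed

lemma sum_list_map_sum_swap:
  "(\<Sum>e\<leftarrow>es. \<Sum>j\<in>J. f j e) = (\<Sum>j\<in>J. \<Sum>e\<leftarrow>es. f j e)"
  by (induction es) (auto simp: sum.distrib)

lemma norm_sum_list_le:
  fixes f :: "'a \<Rightarrow> 'b::real_normed_vector"
  assumes "\<And>x. x \<in> set xs \<Longrightarrow> norm (f x) \<le> b"
  shows "norm (\<Sum>x\<leftarrow>xs. f x) \<le> real (length xs) * b"
  using assms
proof (induction xs)
  case Nil
  then show ?case by simp
next
  case (Cons x xs)
  have "norm (\<Sum>x\<leftarrow>x # xs. f x) \<le> norm (f x) + norm (\<Sum>x\<leftarrow>xs. f x)"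
    by (simp add: norm_triangle_ineq)
  also have "\<dots> \<le> b + real (length xs) * b"
    using Cons by (intro add_mono) auto
  finally show ?case
    by (simp add: algebra_simps)
qed

lemma polynomial_average_tendsto_of_moments:
  fixes es :: "nat \<Rightarrow> complex list" and h :: "real \<times> real \<Rightarrow> complex"
  assumes h: "continuous_on symD h"
    and moments: "\<And>k. (\<lambda>N. (\<Sum>e\<leftarrow>es N. e ^ k) / of_nat (N + 1)) \<longlonglongrightarrow> integral symD (\<lambda>p. h p ^ k) / (2 * pi)"
  shows "(\<lambda>N. (\<Sum>e\<leftarrow>es N. \<Sum>j\<le>D. c j * e ^ j) / of_nat (N + 1))
    \<longlonglongrightarrow> integral symD (\<lambda>p. \<Sum>j\<le>D. c j * h p ^ j) / (2 * pi)"
proof -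
  have "(\<lambda>p. c j * h p ^ j) integrable_on symD" for j
    by (intro integrable_on_symD continuous_intros h)
  then have "integral symD (\<lambda>p. \<Sum>j\<le>D. c j * h p ^ j) / (2 * pi)
      = (\<Sum>j\<le>D. c j * (integral symD (\<lambda>p. h p ^ j) / (2 * pi)))"
    by (simp add: integral_sum sum_divide_distrib)
  moreover have "(\<Sum>e\<leftarrow>es N. \<Sum>j\<le>D. c j * e ^ j) / of_nat (N + 1)
      = (\<Sum>j\<le>D. c j * ((\<Sum>e\<leftarrow>es N. e ^ j) / of_nat (N + 1)))" for N
    by (simp add: sum_list_map_sum_swap sum_list_const_mult sum_divide_distrib)
  ultimately show ?thesis
    by (simp only:) (intro tendsto_sum tendsto_mult tendsto_const moments)
qed

lemma norm_average_diff_le: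
  fixes f g :: "'a \<Rightarrow> complex"
  assumes "length xs = n" "0 < n" "\<And>x. x \<in> set xs \<Longrightarrow> cmod (f x - g x) \<le> \<epsilon>"
  shows "cmod ((\<Sum>x\<leftarrow>xs. f x) / of_nat n - (\<Sum>x\<leftarrow>xs. g x) / of_nat n) \<le> \<epsilon>"
proof -
  have "(\<Sum>x\<leftarrow>xs. f x) / of_nat n - (\<Sum>x\<leftarrow>xs. g x) / of_nat n = (\<Sum>x\<leftarrow>xs. f x - g x) / of_nat n"
    by (simp add: sum_list_subtractf diff_divide_distrib)
  then have "cmod ((\<Sum>x\<leftarrow>xs. f x) / of_nat n - (\<Sum>x\<leftarrow>xs. g x) / of_nat n) = cmod (\<Sum>x\<leftarrow>xs. f x - g x) / real n"
    by (simp only: norm_divide norm_of_nat)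
  also have "\<dots> \<le> real n * \<epsilon> / real n"
    using norm_sum_list_le[of xs "\<lambda>x. f x - g x" \<epsilon>] assms by (intro divide_right_mono) auto
  also have "\<dots> = \<epsilon>"
    using \<open>0 < n\<close> by simp
  finally show ?thesis .
qed

lemma norm_integral_symD_average_diff_le:
  fixes f g :: "real \<times> real \<Rightarrow> complex"
  assumes "continuous_on symD f" "continuous_on symD g" "\<And>p. p \<in> symD \<Longrightarrow> cmod (f p - g p) \<le> \<epsilon>"
  shows "cmod (integral symD f / (2 * pi) - integral symD g / (2 * pi)) \<le> \<epsilon>"
proof -
  have "integral symD f / (2 * pi) - integral symD g / (2 * pi) = integral symD (\<lambda>p. f p - g p) / (2 * pi)"
    using assms(1,2) by (simp add: integral_diff integrable_on_symD diff_divide_distrib)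
  then have "cmod (integral symD f / (2 * pi) - integral symD g / (2 * pi))
      = cmod (integral symD (\<lambda>p. f p - g p)) / (2 * pi)"
    by (simp add: norm_divide)
  also have "\<dots> \<le> \<epsilon> * (2 * pi) / (2 * pi)"
    using assms by (intro divide_right_mono norm_integral_symD_le integrable_on_symD continuous_on_diff) auto
  finally show ?thesis
    by simp
qed

lemma average_tendsto_of_moments:
  fixes es :: "nat \<Rightarrow> complex list" and h :: "real \<times> real \<Rightarrow> complex" and S :: "real set"
    and G :: "complex \<Rightarrow> complex"
  assumes "compact S"
    and es_S: "\<forall>\<^sub>F N in sequentially. set (es N) \<subseteq> complex_of_real ` S"
    and h_S: "h ` symD \<subseteq> complex_of_real ` S" and h: "continuous_on symD h"
    and len: "\<And>N. length (es N) = N + 1"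
    and moments: "\<And>k. (\<lambda>N. (\<Sum>e\<leftarrow>es N. e ^ k) / of_nat (N + 1)) \<longlonglongrightarrow> integral symD (\<lambda>p. h p ^ k) / (2 * pi)"
    and G: "continuous_on (complex_of_real ` S) G"
  shows "(\<lambda>N. (\<Sum>e\<leftarrow>es N. G e) / of_nat (N + 1)) \<longlonglongrightarrow> integral symD (\<lambda>p. G (h p)) / (2 * pi)"
proof (rule tendsto_of_uniform_approximations)
  fix \<epsilon> :: real assume "0 < \<epsilon>"
  then obtain c D where P: "\<And>x. x \<in> S \<Longrightarrow> cmod (G (of_real x) - (\<Sum>j\<le>D. c j * of_real x ^ j)) \<le> \<epsilon>"
    using complex_polynomial_approx_on_reals[OF \<open>compact S\<close> G] by blast
  define P where "P = (\<lambda>z. \<Sum>j\<le>D. c j * z ^ j)"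
  have close: "cmod (G z - P z) \<le> \<epsilon>" if "z \<in> complex_of_real ` S" for z
    using that P unfolding P_def by auto
  have "continuous_on symD (\<lambda>p. G (h p))" "continuous_on symD (\<lambda>p. P (h p))"
    unfolding P_def by (intro continuous_on_compose2[OF G h h_S] continuous_intros h)+
  with close h_S have "cmod (integral symD (\<lambda>p. P (h p)) / (2 * pi) - integral symD (\<lambda>p. G (h p)) / (2 * pi)) \<le> \<epsilon>"
    by (intro norm_integral_symD_average_diff_le) (auto simp: norm_minus_commute)
  moreover have "\<forall>\<^sub>F N in sequentially. cmod ((\<Sum>e\<leftarrow>es N. G e) / of_nat (N + 1) - (\<Sum>e\<leftarrow>es N. P e) / of_nat (N + 1)) \<le> \<epsilon>"
    using es_S
  proof eventually_elim
    case (elim N)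
    show ?case
      by (rule norm_average_diff_le[OF len]) (use close elim in auto)
  qed
  moreover have "(\<lambda>N. (\<Sum>e\<leftarrow>es N. P e) / of_nat (N + 1)) \<longlonglongrightarrow> integral symD (\<lambda>p. P (h p)) / (2 * pi)"
    unfolding P_def by (rule polynomial_average_tendsto_of_moments[OF h moments])
  ultimately show "\<exists>b L'. b \<longlonglongrightarrow> L' \<and> norm (L' - integral symD (\<lambda>p. G (h p)) / (2 * pi)) \<le> \<epsilon>
      \<and> (\<forall>\<^sub>F N in sequentially. norm ((\<Sum>e\<leftarrow>es N. G e) / of_nat (N + 1) - b N) \<le> \<epsilon>)"
    by blast
qed

lemma GLT_of_spec_norm_close:
  assumes "GLT B \<kappa>" "mseq A" "mseq B"
    and "\<kappa> \<in> borel_measurable (lebesgue_on symD)"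
    and close: "\<forall>\<^sub>F n in sequentially. spec_norm (A n - B n) \<le> \<eta> n" and "\<eta> \<longlonglongrightarrow> 0"
  shows "GLT A \<kappa>"
proof (rule GLT.limit[where Bs = "\<lambda>m. B" and \<kappa>s = "\<lambda>m. \<kappa>"])
  show "acs (\<lambda>m. B) A"
    unfolding acs_def
  proof (rule exI[of _ "\<lambda>m. 0"], rule exI[of _ "\<lambda>m. 1 / (real m + 1)"], intro conjI allI)
    show "(\<lambda>m. 1 / (real m + 1)) \<longlonglongrightarrow> 0"
      using LIMSEQ_Suc[OF lim_const_over_n[of 1]] by (simp add: add.commute)
    fix m :: nat
    have "\<forall>\<^sub>F n in sequentially. \<eta> n < 1 / (real m + 1)"
      using order_tendstoD(2)[OF \<open>\<eta> \<longlonglongrightarrow> 0\<close>, of "1 / (real m + 1)"] by simp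
    with close have "\<forall>\<^sub>F n in sequentially. spec_norm (A n - B n) \<le> 1 / (real m + 1)"
      by eventually_elim simp
    then obtain n0 where n0: "\<And>n. n \<ge> n0 \<Longrightarrow> spec_norm (A n - B n) \<le> 1 / (real m + 1)"
      unfolding eventually_sequentially by blast
    show "\<exists>nm. \<forall>n\<ge>nm. \<exists>R N. R \<in> carrier_mat n n \<and> N \<in> carrier_mat n n \<and> A n = B n + R + N
        \<and> real (vec_space.rank n R) \<le> 0 * real n \<and> spec_norm N \<le> 1 / (real m + 1)"
    proof (rule exI[of _ n0], intro allI impI)
      fix n assume "n0 \<le> n"
      have "A n \<in> carrier_mat n n" "B n \<in> carrier_mat n n"
        using \<open>mseq A\<close> \<open>mseq B\<close> by (auto simp: mseq_def)
      moreover have "A n = B n + 0\<^sub>m n n + (A n - B n)"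
        using calculation by (intro eq_matI) auto
      ultimately show "\<exists>R N. R \<in> carrier_mat n n \<and> N \<in> carrier_mat n n \<and> A n = B n + R + N
          \<and> real (vec_space.rank n R) \<le> 0 * real n \<and> spec_norm N \<le> 1 / (real m + 1)"
        using n0[OF \<open>n0 \<le> n\<close>] vec_space.rank_0I[of n]
        by (intro exI[of _ "0\<^sub>m n n"] exI[of _ "A n - B n"]) auto
    qed
  qed simp
  show "conv_in_measure (\<lambda>m. \<kappa>) \<kappa>"
    by (simp add: conv_in_measure_def)
qed (use assms in auto)

definition cw_diag_symbol :: "real \<Rightarrow> real \<Rightarrow> real" where
  "cw_diag_symbol \<Gamma> x = - \<Gamma> / 2 * (2 * x - 1)\<^sup>2"

definition cw_offdiag_symbol :: "real \<Rightarrow> real \<Rightarrow> real" where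
  "cw_offdiag_symbol B x = - B * sqrt ((1 - x) * x)"

definition cw_diag :: "real \<Rightarrow> nat \<Rightarrow> nat \<Rightarrow> real" where
  "cw_diag \<Gamma> N m = cw_diag_symbol \<Gamma> ((real m + 1) / real N)"

definition cw_offdiag :: "real \<Rightarrow> nat \<Rightarrow> nat \<Rightarrow> real" where
  "cw_offdiag B N m = - B * sqrt (1 - (real m + 1) / real N) * sqrt ((real m + 2) / real N)"

lemma Hbar_eq_tridiag_mat: "Hbar \<Gamma> B N = tridiag_mat (N + 1) (cw_diag \<Gamma> N) (cw_offdiag B N)"
proof (rule eq_matI)
  fix i j assume "i < dim_row (tridiag_mat (N + 1) (cw_diag \<Gamma> N) (cw_offdiag B N))"
    "j < dim_col (tridiag_mat (N + 1) (cw_diag \<Gamma> N) (cw_offdiag B N))"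
  then show "Hbar \<Gamma> B N $$ (i, j) = tridiag_mat (N + 1) (cw_diag \<Gamma> N) (cw_offdiag B N) $$ (i, j)"
    unfolding Hbar_def tridiag_mat_def cw_diag_def cw_offdiag_def cw_diag_symbol_def Let_def
    by (auto simp: algebra_simps)
qed (simp_all add: Hbar_def)

lemma h0CW_eq: "h0CW \<Gamma> B (x, t) = complex_of_real (cw_diag_symbol \<Gamma> x + 2 * cw_offdiag_symbol B x * cos t)"
  unfolding h0CW_def cw_diag_symbol_def cw_offdiag_symbol_def by simp

lemma continuous_on_h0CW: "continuous_on S (h0CW \<Gamma> B)"
proof -
  have "h0CW \<Gamma> B = (\<lambda>p. complex_of_real (cw_diag_symbol \<Gamma> (fst p) + 2 * cw_offdiag_symbol B (fst p) * cos (snd p)))"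
    by (auto simp: h0CW_eq)
  then show ?thesis
    unfolding cw_diag_symbol_def cw_offdiag_symbol_def by (auto intro!: continuous_intros)
qed

lemma abs_sqrt_le: "\<bar>y\<bar> \<le> c\<^sup>2 \<Longrightarrow> 0 \<le> c \<Longrightarrow> \<bar>sqrt y\<bar> \<le> c"
  by (metis real_sqrt_abs real_sqrt_le_mono real_sqrt_abs' abs_of_nonneg)

lemma sqrt_diff_le_sqrt_diff:
  assumes "0 \<le> v" "v \<le> u"
  shows "sqrt u - sqrt v \<le> sqrt (u - v)"
proof -
  have "sqrt u \<le> sqrt ((sqrt v + sqrt (u - v))\<^sup>2)"
    using assms by (intro real_sqrt_le_mono) (simp add: power2_sum real_sqrt_mult[symmetric])
  then show ?thesis
    using assms by simp
qed

text \<open>Hoelder continuity of \<open>sqrt\<close> on all of \<open>\<real>\<close> (where \<open>sqrt (- x) = - sqrt x\<close>).\<close>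
lemma abs_sqrt_diff_le: "\<bar>sqrt u - sqrt v\<bar> \<le> 2 * sqrt \<bar>u - v\<bar>"
proof -
  have nonneg: "\<bar>sqrt u - sqrt v\<bar> \<le> sqrt \<bar>u - v\<bar>" if "0 \<le> u" "0 \<le> v" for u v :: real
    using sqrt_diff_le_sqrt_diff[of v u] sqrt_diff_le_sqrt_diff[of u v] that
    by (cases "v \<le> u") (auto simp: abs_minus_commute)
  consider "0 \<le> u" "0 \<le> v" | "u < 0" "v < 0" | "0 \<le> u" "v < 0" | "u < 0" "0 \<le> v"
    by linarith
  then show ?thesis
  proof cases
    case 1
    then show ?thesis using nonneg[of u v] by simp
  next
    case 2
    then show ?thesis
      using nonneg[of "- u" "- v"] by (simp add: real_sqrt_minus abs_minus_commute)
  next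
    case 3
    then have "\<bar>sqrt u - sqrt v\<bar> = sqrt u + sqrt (- v)"
      by (simp add: real_sqrt_minus)
    also have "\<dots> \<le> sqrt \<bar>u - v\<bar> + sqrt \<bar>u - v\<bar>"
      using 3 by (intro add_mono real_sqrt_le_mono) auto
    finally show ?thesis by simp
  next
    case 4
    then have "\<bar>sqrt u - sqrt v\<bar> = sqrt (- u) + sqrt v"
      by (simp add: real_sqrt_minus)
    also have "\<dots> \<le> sqrt \<bar>u - v\<bar> + sqrt \<bar>u - v\<bar>"
      using 4 by (intro add_mono real_sqrt_le_mono) auto
    finally show ?thesis by simp
  qed
qed

lemma abs_cw_diag_symbol_le: "x \<in> {0..2} \<Longrightarrow> \<bar>cw_diag_symbol \<Gamma> x\<bar> \<le> 5 * \<bar>\<Gamma>\<bar>"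
proof -
  assume "x \<in> {0..2}"
  then have "\<bar>2 * x - 1\<bar>\<^sup>2 \<le> 3\<^sup>2"
    by (intro power_mono) auto
  then have "\<bar>cw_diag_symbol \<Gamma> x\<bar> \<le> \<bar>\<Gamma>\<bar> / 2 * 9"
    unfolding cw_diag_symbol_def by (simp add: abs_mult mult_left_mono)
  then show ?thesis by linarith
qed

lemma abs_cw_offdiag_symbol_le: "x \<in> {0..2} \<Longrightarrow> \<bar>cw_offdiag_symbol B x\<bar> \<le> 2 * \<bar>B\<bar>"
proof -
  assume x: "x \<in> {0..2}"
  have "\<bar>(1 - x) * x\<bar> \<le> 1 * 2"
    unfolding abs_mult using x by (intro mult_mono) auto
  then have "\<bar>sqrt ((1 - x) * x)\<bar> \<le> 2"
    by (intro abs_sqrt_le) (auto simp: power2_eq_square)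
  then show ?thesis
    unfolding cw_offdiag_symbol_def by (simp add: abs_mult mult_left_mono mult.commute)
qed

lemma abs_cw_offdiag_le:
  assumes "1 \<le> N" "m < N + 1"
  shows "\<bar>cw_offdiag B N m\<bar> \<le> 2 * \<bar>B\<bar>"
proof -
  have N: "real N \<ge> 1" using assms(1) by simp
  have "\<bar>sqrt (1 - (real m + 1) / real N)\<bar> \<le> 1"
    using assms(2) N by (intro abs_sqrt_le) (auto simp: field_simps)
  moreover have "\<bar>sqrt ((real m + 2) / real N)\<bar> \<le> 2"
    using assms(2) N by (intro abs_sqrt_le) (auto simp: field_simps)
  ultimately have "\<bar>B\<bar> * \<bar>sqrt (1 - (real m + 1) / real N)\<bar> * \<bar>sqrt ((real m + 2) / real N)\<bar> \<le> \<bar>B\<bar> * 1 * 2"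
    by (intro mult_mono) auto
  then show ?thesis
    unfolding cw_offdiag_def by (simp add: abs_mult)
qed

lemma cw_diag_symbol_lipschitz:
  assumes "x \<in> {0..2}" "y \<in> {0..2}"
  shows "\<bar>cw_diag_symbol \<Gamma> x - cw_diag_symbol \<Gamma> y\<bar> \<le> 6 * \<bar>\<Gamma>\<bar> * \<bar>x - y\<bar>"
proof -
  have "cw_diag_symbol \<Gamma> x - cw_diag_symbol \<Gamma> y = - \<Gamma> * (x - y) * (2 * x + 2 * y - 2)"
    unfolding cw_diag_symbol_def by (simp add: power2_eq_square algebra_simps)
  then have "\<bar>cw_diag_symbol \<Gamma> x - cw_diag_symbol \<Gamma> y\<bar> = \<bar>\<Gamma>\<bar> * \<bar>x - y\<bar> * \<bar>2 * x + 2 * y - 2\<bar>"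
    by (simp add: abs_mult)
  also have "\<dots> \<le> \<bar>\<Gamma>\<bar> * \<bar>x - y\<bar> * 6"
    using assms by (intro mult_left_mono) auto
  finally show ?thesis by simp
qed

lemma abs_cw_diag_minus_symbol_le:
  assumes "1 \<le> N" "j < N + 1" "x \<in> {0..2}"
  shows "\<bar>cw_diag \<Gamma> N j - cw_diag_symbol \<Gamma> x\<bar> \<le> 6 * \<bar>\<Gamma>\<bar> * \<bar>(real j + 1) / real N - x\<bar>"
  unfolding cw_diag_def using cw_diag_symbol_lipschitz[OF _ assms(3)] shifted_sample_mem[OF assms(1,2)]
  by (simp add: add.commute)

lemma abs_cw_offdiag_minus_symbol_le:
  assumes "1 \<le> N" "j < N + 1" "x \<in> {0..2}"
  shows "\<bar>cw_offdiag B N j - cw_offdiag_symbol B x\<bar> \<le> 6 * \<bar>B\<bar> * sqrt (\<bar>(real j + 1) / real N - x\<bar> + 1 / real N)"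
proof -
  define y where "y = (real j + 1) / real N"
  define s where "s = sqrt (\<bar>y - x\<bar> + 1 / real N)"
  have N: "real N \<ge> 1" using assms(1) by simp
  have y: "y \<in> {0..2}"
    unfolding y_def using assms(2) N by (simp add: field_simps)
  have "cw_offdiag B N j - cw_offdiag_symbol B x
      = - B * (sqrt (1 - y) * (sqrt (y + 1 / real N) - sqrt x) + sqrt x * (sqrt (1 - y) - sqrt (1 - x)))"
    using N unfolding cw_offdiag_def cw_offdiag_symbol_def y_def real_sqrt_mult
    by (simp add: algebra_simps add_divide_distrib)
  then have "\<bar>cw_offdiag B N j - cw_offdiag_symbol B x\<bar>
      \<le> \<bar>B\<bar> * (\<bar>sqrt (1 - y)\<bar> * \<bar>sqrt (y + 1 / real N) - sqrt x\<bar> + \<bar>sqrt x\<bar> * \<bar>sqrt (1 - y) - sqrt (1 - x)\<bar>)"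
    by (simp add: abs_mult mult_left_mono abs_triangle_ineq[THEN order_trans])
  also have "\<dots> \<le> \<bar>B\<bar> * (1 * (2 * s) + 2 * (2 * s))"
  proof (intro mult_left_mono add_mono mult_mono)
    show "\<bar>sqrt (1 - y)\<bar> \<le> 1"
      using y by (intro abs_sqrt_le) auto
    show "\<bar>sqrt x\<bar> \<le> 2"
      using assms(3) by (intro abs_sqrt_le) auto
    have "\<bar>y + 1 / real N - x\<bar> \<le> \<bar>y - x\<bar> + 1 / real N"
      using abs_triangle_ineq[of "y - x" "1 / real N"] by (simp add: algebra_simps)
    then show "\<bar>sqrt (y + 1 / real N) - sqrt x\<bar> \<le> 2 * s"
      unfolding s_def by (intro order_trans[OF abs_sqrt_diff_le] mult_left_mono real_sqrt_le_mono) auto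
    show "\<bar>sqrt (1 - y) - sqrt (1 - x)\<bar> \<le> 2 * s"
      unfolding s_def by (intro order_trans[OF abs_sqrt_diff_le] mult_left_mono real_sqrt_le_mono)
        (auto simp: abs_minus_commute)
  qed auto
  finally show ?thesis
    unfolding s_def y_def by simp
qed

lemma Hbar_trace_pow_tendsto:
  "(\<lambda>N. mat_trace (Hbar \<Gamma> B N ^\<^sub>m k) / real (N + 1))
     \<longlonglongrightarrow> integral {0..1} (\<lambda>x. cos_power_coeff (cw_diag_symbol \<Gamma> x) (cw_offdiag_symbol B x) k 0)"
  unfolding Hbar_eq_tridiag_mat
proof (rule tridiag_trace_pow_tendsto[where K = "5 * \<bar>\<Gamma>\<bar> + 2 * \<bar>B\<bar>"
      and \<delta> = "\<lambda>N. 6 * \<bar>\<Gamma>\<bar> * (real k / real N) + 6 * \<bar>B\<bar> * sqrt ((real k + 1) / real N)"])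
  show "continuous_on {0..2} (cw_diag_symbol \<Gamma>)" "continuous_on {0..2} (cw_offdiag_symbol B)"
    unfolding cw_diag_symbol_def cw_offdiag_symbol_def by (intro continuous_intros)+
  show "\<bar>cw_diag_symbol \<Gamma> x\<bar> \<le> 5 * \<bar>\<Gamma>\<bar> + 2 * \<bar>B\<bar> \<and> \<bar>cw_offdiag_symbol B x\<bar> \<le> 5 * \<bar>\<Gamma>\<bar> + 2 * \<bar>B\<bar>"
    if "x \<in> {0..2}" for x
    using abs_cw_diag_symbol_le[OF that, of \<Gamma>] abs_cw_offdiag_symbol_le[OF that, of B] by auto
  show "\<bar>cw_diag \<Gamma> N j\<bar> \<le> 5 * \<bar>\<Gamma>\<bar> + 2 * \<bar>B\<bar> \<and> \<bar>cw_offdiag B N j\<bar> \<le> 5 * \<bar>\<Gamma>\<bar> + 2 * \<bar>B\<bar>"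
    if "1 \<le> N" "j < N + 1" for N j
    using abs_cw_diag_symbol_le[OF shifted_sample_mem[OF that], of \<Gamma>] abs_cw_offdiag_le[OF that, of B]
    by (auto simp: cw_diag_def add.commute)
  show "(\<lambda>N. 6 * \<bar>\<Gamma>\<bar> * (real k / real N) + 6 * \<bar>B\<bar> * sqrt ((real k + 1) / real N)) \<longlonglongrightarrow> 0"
    using tendsto_add_zero[OF tendsto_mult_right_zero[OF lim_const_over_n]
        tendsto_mult_right_zero[OF tendsto_real_sqrt[OF lim_const_over_n, unfolded real_sqrt_zero]]]
    by simp
  fix N i j assume N: "1 \<le> N" and ij: "i < N + 1" "j < N + 1" "i \<le> j + k" "j \<le> i + k"
  define x where "x = real (i + 1) / real N"
  have x: "x \<in> {0..2}"
    unfolding x_def using shifted_sample_mem[OF N ij(1)] .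
  have dist: "\<bar>(real j + 1) / real N - x\<bar> \<le> real k / real N"
    using ij N by (simp add: x_def abs_divide diff_divide_distrib[symmetric] divide_right_mono)
  then have close: "\<bar>(real j + 1) / real N - x\<bar> + 1 / real N \<le> (real k + 1) / real N"
    by (simp add: add_divide_distrib)
  have "\<bar>cw_diag \<Gamma> N j - cw_diag_symbol \<Gamma> x\<bar> \<le> 6 * \<bar>\<Gamma>\<bar> * \<bar>(real j + 1) / real N - x\<bar>"
    by (rule abs_cw_diag_minus_symbol_le[OF N ij(2) x])
  also have "\<dots> \<le> 6 * \<bar>\<Gamma>\<bar> * (real k / real N)"
    using dist by (intro mult_left_mono) auto
  finally have diag: "\<bar>cw_diag \<Gamma> N j - cw_diag_symbol \<Gamma> x\<bar> \<le> 6 * \<bar>\<Gamma>\<bar> * (real k / real N)" .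
  have "\<bar>cw_offdiag B N j - cw_offdiag_symbol B x\<bar> \<le> 6 * \<bar>B\<bar> * sqrt (\<bar>(real j + 1) / real N - x\<bar> + 1 / real N)"
    by (rule abs_cw_offdiag_minus_symbol_le[OF N ij(2) x])
  also have "\<dots> \<le> 6 * \<bar>B\<bar> * sqrt ((real k + 1) / real N)"
    using close by (intro mult_left_mono real_sqrt_le_mono) auto
  finally have offdiag: "\<bar>cw_offdiag B N j - cw_offdiag_symbol B x\<bar> \<le> 6 * \<bar>B\<bar> * sqrt ((real k + 1) / real N)" .
  have "0 \<le> 6 * \<bar>\<Gamma>\<bar> * (real k / real N)" "0 \<le> 6 * \<bar>B\<bar> * sqrt ((real k + 1) / real N)"
    by simp_all
  with diag offdiag show "\<bar>cw_diag \<Gamma> N j - cw_diag_symbol \<Gamma> (real (i + 1) / real N)\<bar>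
      \<le> 6 * \<bar>\<Gamma>\<bar> * (real k / real N) + 6 * \<bar>B\<bar> * sqrt ((real k + 1) / real N) \<and>
    \<bar>cw_offdiag B N j - cw_offdiag_symbol B (real (i + 1) / real N)\<bar>
      \<le> 6 * \<bar>\<Gamma>\<bar> * (real k / real N) + 6 * \<bar>B\<bar> * sqrt ((real k + 1) / real N)"
    unfolding x_def by linarith
qed

lemma integral_symD_h0CW_power:
  "integral symD (\<lambda>p. h0CW \<Gamma> B p ^ k)
     = 2 * pi * integral {0..1} (\<lambda>x. cos_power_coeff (cw_diag_symbol \<Gamma> x) (cw_offdiag_symbol B x) k 0)"
proof -
  let ?q = "\<lambda>x. cos_power_coeff (cw_diag_symbol \<Gamma> x) (cw_offdiag_symbol B x) k 0"
  have cont_q: "continuous_on {0..1} ?q"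
    unfolding cw_diag_symbol_def cw_offdiag_symbol_def
    by (intro continuous_on_cos_power_coeff continuous_intros)
  have "integral symD (\<lambda>p. h0CW \<Gamma> B p ^ k)
      = integral {0..1} (\<lambda>x. integral {-pi..pi} (\<lambda>t. h0CW \<Gamma> B (x, t) ^ k))"
    unfolding symD_eq_cbox
    by (subst integral_prod_continuous) (auto intro!: continuous_intros continuous_on_h0CW simp: cbox_interval)
  also have "\<dots> = integral {0..1} (\<lambda>x. complex_of_real (2 * pi * ?q x))"
    using integral_cos_power_cis[of _ _ k 0] by (simp add: h0CW_eq)
  also have "\<dots> = complex_of_real (integral {0..1} (\<lambda>x. 2 * pi * ?q x))"
    using integrable_continuous_interval[OF continuous_on_mult[OF continuous_on_const cont_q], of "2 * pi"]
    by (intro integral_unique has_integral_linear[OF integrable_integral bounded_linear_of_real, unfolded o_def])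
  finally show ?thesis
    by simp
qed

lemma Hbar_moments_tendsto:
  "(\<lambda>N. mat_trace (map_mat complex_of_real (Hbar \<Gamma> B N) ^\<^sub>m k) / of_nat (N + 1))
     \<longlonglongrightarrow> integral symD (\<lambda>p. h0CW \<Gamma> B p ^ k) / (2 * pi)"
proof -
  have "mat_trace (map_mat complex_of_real (Hbar \<Gamma> B N) ^\<^sub>m k) = of_real (mat_trace (Hbar \<Gamma> B N ^\<^sub>m k))" for N
  proof -
    have H: "Hbar \<Gamma> B N \<in> carrier_mat (N + 1) (N + 1)"
      by (simp add: Hbar_def)
    show ?thesis
      unfolding of_real_hom.mat_hom_pow[OF H, symmetric]
      by (rule mat_trace_of_real[of _ "N + 1"]) (use H in simp)
  qed
  then show ?thesis
    using tendsto_of_real[where 'a = complex, OF Hbar_trace_pow_tendsto[of \<Gamma> B k]]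
    by (simp add: integral_symD_h0CW_power of_real_divide)
qed

lemma Hbar_carrier: "Hbar \<Gamma> B N \<in> carrier_mat (N + 1) (N + 1)"
  by (simp add: Hbar_def)

lemma Hbar_hermitian:
  "mat_adjoint (map_mat complex_of_real (Hbar \<Gamma> B N)) = map_mat complex_of_real (Hbar \<Gamma> B N)"
  by (rule mat_adjoint_of_real_symmetric[OF Hbar_carrier]) (simp add: Hbar_eq_tridiag_mat tridiag_mat_symmetric)

lemma Hbar_eigenvalue_bound:
  assumes "1 \<le> N" "poly (char_poly (map_mat complex_of_real (Hbar \<Gamma> B N))) \<mu> = 0"
  shows "cmod \<mu> \<le> 5 * \<bar>\<Gamma>\<bar> + 4 * \<bar>B\<bar>"
proof (rule char_poly_root_norm_le_row_sum[OF _ assms(2)])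
  show "map_mat complex_of_real (Hbar \<Gamma> B N) \<in> carrier_mat (N + 1) (N + 1)"
    using Hbar_carrier by simp
  fix i assume "i < N + 1"
  have "\<bar>cw_diag \<Gamma> N j\<bar> \<le> 5 * \<bar>\<Gamma>\<bar> \<and> \<bar>cw_offdiag B N j\<bar> \<le> 2 * \<bar>B\<bar>" if "j < N + 1" for j
    using abs_cw_diag_symbol_le[OF shifted_sample_mem[OF assms(1) that], of \<Gamma>] abs_cw_offdiag_le[OF assms(1) that, of B]
    by (simp add: cw_diag_def add.commute)
  from row_sum_tridiag_mat_le[OF \<open>i < N + 1\<close> this]
  show "(\<Sum>j<N + 1. cmod (map_mat complex_of_real (Hbar \<Gamma> B N) $$ (i,j))) \<le> 5 * \<bar>\<Gamma>\<bar> + 4 * \<bar>B\<bar>"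
    using \<open>i < N + 1\<close> Hbar_carrier[of \<Gamma> B N] by (simp add: Hbar_eq_tridiag_mat)
qed

lemma Hbar_real_eigenvalue_mem:
  assumes "1 \<le> N" "poly (char_poly (map_mat complex_of_real (Hbar \<Gamma> B N))) \<mu> = 0" "\<mu> \<in> \<real>"
  shows "\<mu> \<in> complex_of_real ` {- (5 * \<bar>\<Gamma>\<bar> + 4 * \<bar>B\<bar>)..5 * \<bar>\<Gamma>\<bar> + 4 * \<bar>B\<bar>}"
proof -
  obtain r where \<mu>: "\<mu> = of_real r"
    using assms(3) by (auto elim: Reals_cases)
  have "\<bar>r\<bar> \<le> 5 * \<bar>\<Gamma>\<bar> + 4 * \<bar>B\<bar>"
    using Hbar_eigenvalue_bound[OF assms(1,2)] by (simp add: \<mu>)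
  then show ?thesis
    unfolding \<mu> by (intro imageI) (simp add: abs_le_iff)
qed

lemma h0CW_mem: "p \<in> symD \<Longrightarrow> h0CW \<Gamma> B p \<in> complex_of_real ` {- (5 * \<bar>\<Gamma>\<bar> + 4 * \<bar>B\<bar>)..5 * \<bar>\<Gamma>\<bar> + 4 * \<bar>B\<bar>}"
proof -
  assume "p \<in> symD"
  then obtain x t where p: "p = (x, t)" and x: "x \<in> {0..2}"
    by (auto simp: symD_def)
  have "\<bar>2 * cw_offdiag_symbol B x * cos t\<bar> \<le> 2 * (2 * \<bar>B\<bar>) * 1"
    unfolding abs_mult using abs_cw_offdiag_symbol_le[OF x, of B] by (intro mult_mono) auto
  then have "\<bar>cw_diag_symbol \<Gamma> x + 2 * cw_offdiag_symbol B x * cos t\<bar> \<le> 5 * \<bar>\<Gamma>\<bar> + 4 * \<bar>B\<bar>"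
    using abs_cw_diag_symbol_le[OF x, of \<Gamma>] by linarith
  then show ?thesis
    unfolding p h0CW_eq by (intro imageI) (auto simp: abs_le_iff)
qed

lemma Hbar_eigenvalue_lists:
  fixes \<Gamma> B :: real
  defines "M \<equiv> 5 * \<bar>\<Gamma>\<bar> + 4 * \<bar>B\<bar>"
  shows "\<exists>es :: nat \<Rightarrow> complex list.
    (\<forall>N F. eig_sum F (map_mat complex_of_real (Hbar \<Gamma> B N)) = (\<Sum>e\<leftarrow>es N. F e))
    \<and> (\<forall>N F. sv_sum F (map_mat complex_of_real (Hbar \<Gamma> B N)) = (\<Sum>e\<leftarrow>es N. F (cmod e)))
    \<and> (\<forall>G :: complex \<Rightarrow> complex. continuous_on (complex_of_real ` {- M..M}) G \<longrightarrow>
      (\<lambda>N. (\<Sum>e\<leftarrow>es N. G e) / of_nat (N + 1)) \<longlonglongrightarrow> integral symD (\<lambda>p. G (h0CW \<Gamma> B p)) / (2 * pi))"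
proof -
  let ?H = "\<lambda>N. map_mat complex_of_real (Hbar \<Gamma> B N)"
  define spectrum_list where "spectrum_list N es \<longleftrightarrow> length es = N + 1
    \<and> (\<forall>e\<in>set es. poly (char_poly (?H N)) e = 0 \<and> e \<in> \<real>)
    \<and> (\<forall>F. eig_sum F (?H N) = (\<Sum>e\<leftarrow>es. F e)) \<and> (\<forall>F. sv_sum F (?H N) = (\<Sum>e\<leftarrow>es. F (cmod e)))
    \<and> (\<forall>k. mat_trace (?H N ^\<^sub>m k) = (\<Sum>e\<leftarrow>es. e ^ k))" for N es
  have "\<forall>N. \<exists>es. spectrum_list N es"
  proof
    fix N
    have HN: "?H N \<in> carrier_mat (N + 1) (N + 1)"
      using Hbar_carrier by simp
    show "\<exists>es. spectrum_list N es"
      by (rule hermitian_eigenvalue_list[OF HN Hbar_hermitian]) (unfold spectrum_list_def, blast)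
  qed
  then obtain es where es: "\<And>N. spectrum_list N (es N)"
    using choice by blast
  have trace: "mat_trace (?H N ^\<^sub>m k) = (\<Sum>e\<leftarrow>es N. e ^ k)" for N k
    using es[of N] by (simp add: spectrum_list_def)
  have bounded: "set (es N) \<subseteq> complex_of_real ` {- M..M}" if "1 \<le> N" for N
    using es[of N] Hbar_real_eigenvalue_mem[OF that] by (auto simp: spectrum_list_def M_def)
  have "(\<lambda>N. (\<Sum>e\<leftarrow>es N. G e) / of_nat (N + 1)) \<longlonglongrightarrow> integral symD (\<lambda>p. G (h0CW \<Gamma> B p)) / (2 * pi)"
    if G: "continuous_on (complex_of_real ` {- M..M}) G" for G :: "complex \<Rightarrow> complex"
  proof (rule average_tendsto_of_moments[OF compact_Icc _ _ continuous_on_h0CW _ _ G])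
    show "\<forall>\<^sub>F N in sequentially. set (es N) \<subseteq> complex_of_real ` {- M..M}"
      using bounded by (rule eventually_sequentiallyI)
    show "h0CW \<Gamma> B ` symD \<subseteq> complex_of_real ` {- M..M}"
      using h0CW_mem unfolding M_def by blast
    show "length (es N) = N + 1" for N
      using es[of N] by (simp add: spectrum_list_def)
    show "(\<lambda>N. (\<Sum>e\<leftarrow>es N. e ^ k) / of_nat (N + 1)) \<longlonglongrightarrow> integral symD (\<lambda>p. h0CW \<Gamma> B p ^ k) / (2 * pi)"
      for k
      using Hbar_moments_tendsto[of \<Gamma> B k] unfolding trace .
  qed
  moreover have "eig_sum F (?H N) = (\<Sum>e\<leftarrow>es N. F e)" "sv_sum F' (?H N) = (\<Sum>e\<leftarrow>es N. F' (cmod e))"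
    for N F F'
    using es[of N] by (simp_all add: spectrum_list_def)
  ultimately show ?thesis
    by blast
qed

lemma Hbar_distributions:
  "lambda_distributed (\<lambda>N. map_mat complex_of_real (Hbar \<Gamma> B N)) (h0CW \<Gamma> B)
   \<and> sigma_distributed (\<lambda>N. map_mat complex_of_real (Hbar \<Gamma> B N)) (h0CW \<Gamma> B)"
proof -
  let ?H = "\<lambda>N. map_mat complex_of_real (Hbar \<Gamma> B N)"
  let ?M = "5 * \<bar>\<Gamma>\<bar> + 4 * \<bar>B\<bar>"
  obtain es where eig: "\<And>N F. eig_sum F (?H N) = (\<Sum>e\<leftarrow>es N. F e)"
    and sv: "\<And>N F. sv_sum F (?H N) = (\<Sum>e\<leftarrow>es N. F (cmod e))"
    and lim: "\<And>G :: complex \<Rightarrow> complex. continuous_on (complex_of_real ` {- ?M..?M}) G \<Longrightarrow>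
      (\<lambda>N. (\<Sum>e\<leftarrow>es N. G e) / of_nat (N + 1)) \<longlonglongrightarrow> integral symD (\<lambda>p. G (h0CW \<Gamma> B p)) / (2 * pi)"
    using Hbar_eigenvalue_lists[of \<Gamma> B] by blast
  have dim: "dim_row (Hbar \<Gamma> B N) = N + 1" for N
    using Hbar_carrier[of \<Gamma> B N] by simp
  have "(\<lambda>N. eig_sum F (?H N) / of_nat (dim_row (?H N))) \<longlonglongrightarrow> integral symD (\<lambda>p. F (h0CW \<Gamma> B p)) / (2 * pi)"
    if "compact_supp F" for F
    using lim[OF continuous_on_subset[of UNIV F]] that by (simp add: eig dim compact_supp_def)
  moreover have "(\<lambda>N. sv_sum F (?H N) / of_nat (dim_row (?H N))) \<longlonglongrightarrow> integral symD (\<lambda>p. F (cmod (h0CW \<Gamma> B p))) / (2 * pi)"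
    if "compact_supp F" for F
  proof -
    have "continuous_on UNIV F"
      using that by (simp add: compact_supp_def)
    then have "continuous_on UNIV (\<lambda>z. F (cmod z))"
      by (rule continuous_on_compose2) (auto intro: continuous_on_norm_id)
    then show ?thesis
      using lim[OF continuous_on_subset[of UNIV "\<lambda>z. F (cmod z)"]] by (simp add: sv dim)
  qed
  ultimately show ?thesis
    by (simp add: lambda_distributed_def sigma_distributed_def)
qed

section \<open>The GLT symbol\<close>

lemma fourier_coeff_two_cos:
  "fourier_coeff (\<lambda>\<theta>. complex_of_real (2 * cos \<theta>)) k = (if k = 1 \<or> k = -1 then 1 else 0)"
  using integral_cos_power_cis[of 0 1 1 k]
  by (auto simp: fourier_coeff_def cis_conv_exp mult.commute)

definition cw_model :: "real \<Rightarrow> real \<Rightarrow> nat \<Rightarrow> complex mat" where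
  "cw_model \<Gamma> B n = diag_sample n (\<lambda>x. complex_of_real (cw_diag_symbol \<Gamma> x))
     + diag_sample n (\<lambda>x. complex_of_real (cw_offdiag_symbol B x)) * toeplitz n (\<lambda>\<theta>. complex_of_real (2 * cos \<theta>))"

lemma GLT_cw_model: "GLT (cw_model \<Gamma> B) (h0CW \<Gamma> B)"
proof -
  have "GLT (\<lambda>n. diag_sample n (\<lambda>x. complex_of_real (cw_diag_symbol \<Gamma> x))) (\<lambda>(x, \<theta>). complex_of_real (cw_diag_symbol \<Gamma> x))"
    unfolding cw_diag_symbol_def by (intro GLT.diag riemann_integrable01_continuous continuous_intros)
  moreover have "GLT (\<lambda>n. diag_sample n (\<lambda>x. complex_of_real (cw_offdiag_symbol B x))) (\<lambda>(x, \<theta>). complex_of_real (cw_offdiag_symbol B x))"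
    unfolding cw_offdiag_symbol_def by (intro GLT.diag riemann_integrable01_continuous continuous_intros)
  moreover have "GLT (\<lambda>n. toeplitz n (\<lambda>\<theta>. complex_of_real (2 * cos \<theta>))) (\<lambda>(x, \<theta>). complex_of_real (2 * cos \<theta>))"
    by (intro GLT.toeplitz absolutely_integrable_continuous_real continuous_intros)
  ultimately have "GLT (cw_model \<Gamma> B) (\<lambda>p. (\<lambda>(x, \<theta>). complex_of_real (cw_diag_symbol \<Gamma> x)) p
      + (\<lambda>(x, \<theta>). complex_of_real (cw_offdiag_symbol B x)) p * (\<lambda>(x, \<theta>). complex_of_real (2 * cos \<theta>)) p)"
    unfolding cw_model_def[abs_def] by (intro GLT.add GLT.mult)
  moreover have "(\<lambda>p. (\<lambda>(x, \<theta>). complex_of_real (cw_diag_symbol \<Gamma> x)) p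
      + (\<lambda>(x, \<theta>). complex_of_real (cw_offdiag_symbol B x)) p * (\<lambda>(x, \<theta>). complex_of_real (2 * cos \<theta>)) p)
      = h0CW \<Gamma> B"
    by (auto simp: h0CW_eq fun_eq_iff)
  ultimately show ?thesis
    by simp
qed

lemma cw_model_carrier: "cw_model \<Gamma> B n \<in> carrier_mat n n"
  unfolding cw_model_def diag_sample_def toeplitz_def by (intro add_carrier_mat mult_carrier_mat) auto

lemma cw_model_index:
  assumes "i < n" "j < n"
  shows "cw_model \<Gamma> B n $$ (i,j) = (if i = j then cw_diag_symbol \<Gamma> ((real i + 1) / real n) else 0)
     + (if i = j + 1 \<or> j = i + 1 then cw_offdiag_symbol B ((real i + 1) / real n) else 0)"
proof -
  let ?D = "\<lambda>f. diag_sample n (\<lambda>x. complex_of_real (f x))"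
  let ?T = "toeplitz n (\<lambda>\<theta>. complex_of_real (2 * cos \<theta>))"
  have "(?D (cw_offdiag_symbol B) * ?T) $$ (i,j) = (\<Sum>l<n. ?D (cw_offdiag_symbol B) $$ (i,l) * ?T $$ (l,j))"
    using assms by (intro index_mult_mat_eq_sum) (auto simp: diag_sample_def toeplitz_def)
  also have "\<dots> = (\<Sum>l<n. if l = i then cw_offdiag_symbol B (real (Suc i) / real n)
      * fourier_coeff (\<lambda>\<theta>. complex_of_real (2 * cos \<theta>)) (int i - int j) else 0)"
    using assms by (intro sum.cong) (auto simp: diag_sample_def toeplitz_def)
  also have "\<dots> = cw_offdiag_symbol B (real (Suc i) / real n) * fourier_coeff (\<lambda>\<theta>. complex_of_real (2 * cos \<theta>)) (int i - int j)"
    using assms by simp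
  finally have prod: "(?D (cw_offdiag_symbol B) * ?T) $$ (i,j)
      = cw_offdiag_symbol B (real (Suc i) / real n) * fourier_coeff (\<lambda>\<theta>. complex_of_real (2 * cos \<theta>)) (int i - int j)" .
  have "cw_model \<Gamma> B n $$ (i,j) = ?D (cw_diag_symbol \<Gamma>) $$ (i,j) + (?D (cw_offdiag_symbol B) * ?T) $$ (i,j)"
    unfolding cw_model_def using assms by (intro index_add_mat(1)) (auto simp: diag_sample_def toeplitz_def)
  then show ?thesis
    using assms unfolding prod fourier_coeff_two_cos by (auto simp: diag_sample_def add.commute)
qed

lemma abs_sample_shift_le:
  fixes N i j :: nat
  assumes "1 \<le> N" "i < N + 1" "i = j \<or> i = j + 1"
  shows "\<bar>(real j + 1) / real N - (real i + 1) / real (N + 1)\<bar> \<le> 1 / real N"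
proof -
  have N: "real N \<ge> 1" "real N * (real N + 1) > 0"
    using assms(1) by auto
  have "(real j + 1) / real N - (real i + 1) / real (N + 1) = (real j + 1 - real N * (real i - real j)) / (real N * (real N + 1))"
    using N by (simp add: field_simps)
  also have "\<bar>\<dots>\<bar> = \<bar>real j + 1 - real N * (real i - real j)\<bar> / (real N * (real N + 1))"
    using N by (simp add: abs_divide)
  also have "\<dots> \<le> (real N + 1) / (real N * (real N + 1))"
  proof (rule divide_right_mono)
    show "\<bar>real j + 1 - real N * (real i - real j)\<bar> \<le> real N + 1"
      using assms by (cases "i = j") (auto simp: abs_le_iff)
  qed (use N in linarith)
  also have "\<dots> = 1 / real N"
    using N by simp
  finally show ?thesis .
qed

lemma model_sample_mem:
  fixes N i :: nat
  assumes "i < N + 1"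
  shows "(real i + 1) / real (N + 1) \<in> {0..2}"
proof -
  have "real i + 1 \<le> real (N + 1)"
    using assms by linarith
  then show ?thesis
    by (simp add: divide_le_eq)
qed

lemma abs_cw_diag_minus_model_le:
  assumes "1 \<le> N" "i < N + 1"
  shows "\<bar>cw_diag \<Gamma> N i - cw_diag_symbol \<Gamma> ((real i + 1) / real (N + 1))\<bar> \<le> 6 * \<bar>\<Gamma>\<bar> / real N"
proof -
  have "\<bar>cw_diag \<Gamma> N i - cw_diag_symbol \<Gamma> ((real i + 1) / real (N + 1))\<bar>
      \<le> 6 * \<bar>\<Gamma>\<bar> * \<bar>(real i + 1) / real N - (real i + 1) / real (N + 1)\<bar>"
    by (rule abs_cw_diag_minus_symbol_le[OF assms model_sample_mem[OF assms(2)]])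
  also have "\<dots> \<le> 6 * \<bar>\<Gamma>\<bar> * (1 / real N)"
    using abs_sample_shift_le[OF assms, of i] by (intro mult_left_mono) auto
  finally show ?thesis
    by simp
qed

lemma abs_cw_offdiag_minus_model_le:
  assumes "1 \<le> N" "i < N + 1" "i = j \<or> i = j + 1"
  shows "\<bar>cw_offdiag B N j - cw_offdiag_symbol B ((real i + 1) / real (N + 1))\<bar> \<le> 6 * \<bar>B\<bar> * sqrt (2 / real N)"
proof -
  have "j < N + 1"
    using assms(2,3) by auto
  then have "\<bar>cw_offdiag B N j - cw_offdiag_symbol B ((real i + 1) / real (N + 1))\<bar>
      \<le> 6 * \<bar>B\<bar> * sqrt (\<bar>(real j + 1) / real N - (real i + 1) / real (N + 1)\<bar> + 1 / real N)"
    by (rule abs_cw_offdiag_minus_symbol_le[OF assms(1) _ model_sample_mem[OF assms(2)]])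
  also have "\<dots> \<le> 6 * \<bar>B\<bar> * sqrt (2 / real N)"
    using abs_sample_shift_le[OF assms] by (intro mult_left_mono real_sqrt_le_mono) auto
  finally show ?thesis .
qed

definition cw_seq :: "real \<Rightarrow> real \<Rightarrow> nat \<Rightarrow> complex mat" where
  "cw_seq \<Gamma> B n = (if n = 0 then 0\<^sub>m 0 0 else map_mat complex_of_real (Hbar \<Gamma> B (n - 1)))"

lemma cw_seq_carrier: "cw_seq \<Gamma> B n \<in> carrier_mat n n"
  by (cases n) (use Hbar_carrier in \<open>simp_all add: cw_seq_def\<close>)

lemma cw_seq_minus_model_index:
  assumes "2 \<le> n" "i < n" "j < n"
  defines "N \<equiv> n - 1"
  shows "(cw_seq \<Gamma> B n - cw_model \<Gamma> B n) $$ (i,j) = complex_of_real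
    ((if i = j then cw_diag \<Gamma> N i - cw_diag_symbol \<Gamma> ((real i + 1) / real (N + 1))
      else if j = i + 1 then cw_offdiag B N i - cw_offdiag_symbol B ((real i + 1) / real (N + 1))
      else if i = j + 1 then cw_offdiag B N j - cw_offdiag_symbol B ((real i + 1) / real (N + 1))
      else 0))"
proof -
  have n: "n = N + 1"
    using assms(1) by (simp add: N_def)
  have "(cw_seq \<Gamma> B n - cw_model \<Gamma> B n) $$ (i,j) = cw_seq \<Gamma> B n $$ (i,j) - cw_model \<Gamma> B n $$ (i,j)"
    using assms cw_model_carrier[of \<Gamma> B n] by (intro index_minus_mat(1)) auto
  also have "cw_seq \<Gamma> B n $$ (i,j) = complex_of_real (tridiag_mat n (cw_diag \<Gamma> N) (cw_offdiag B N) $$ (i,j))"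
    using assms(2,3) unfolding cw_seq_def n by (simp add: Hbar_eq_tridiag_mat)
  finally show ?thesis
    using assms(2,3) cw_model_index[OF assms(2,3), of \<Gamma> B] by (auto simp: tridiag_mat_def n)
qed

lemma spec_norm_cw_seq_minus_model_le:
  assumes "2 \<le> n"
  shows "spec_norm (cw_seq \<Gamma> B n - cw_model \<Gamma> B n)
    \<le> 3 * (6 * \<bar>\<Gamma>\<bar> / real (n - 1) + 6 * \<bar>B\<bar> * sqrt (2 / real (n - 1)))"
proof (rule spec_norm_tridiagonal_le)
  show "cw_seq \<Gamma> B n - cw_model \<Gamma> B n \<in> carrier_mat n n"
    using cw_seq_carrier cw_model_carrier by (intro minus_carrier_mat) auto
  define N where "N = n - 1"
  have N: "1 \<le> N" "n = N + 1"
    using assms by (auto simp: N_def)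
  fix i j assume ij: "i < n" "j < n"
  show "cmod ((cw_seq \<Gamma> B n - cw_model \<Gamma> B n) $$ (i,j)) \<le> 6 * \<bar>\<Gamma>\<bar> / real (n - 1) + 6 * \<bar>B\<bar> * sqrt (2 / real (n - 1))"
    unfolding cw_seq_minus_model_index[OF assms ij] norm_of_real N_def[symmetric]
    using abs_cw_diag_minus_model_le[OF N(1), of i \<Gamma>] abs_cw_offdiag_minus_model_le[OF N(1), of i j B]
      abs_cw_offdiag_minus_model_le[OF N(1), of i i B] ij N
    by (auto intro: add_increasing add_increasing2)
  show "j \<noteq> i \<Longrightarrow> j \<noteq> i + 1 \<Longrightarrow> i \<noteq> j + 1 \<Longrightarrow> (cw_seq \<Gamma> B n - cw_model \<Gamma> B n) $$ (i,j) = 0"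
    unfolding cw_seq_minus_model_index[OF assms ij] by simp
qed simp

lemma GLT_cw_seq: "GLT (cw_seq \<Gamma> B) (h0CW \<Gamma> B)"
proof (rule GLT_of_spec_norm_close[OF GLT_cw_model])
  show "mseq (cw_seq \<Gamma> B)" "mseq (cw_model \<Gamma> B)"
    by (auto simp: mseq_def cw_seq_carrier cw_model_carrier)
  show "h0CW \<Gamma> B \<in> borel_measurable (lebesgue_on symD)"
    by (intro continuous_imp_measurable_on_sets_lebesgue continuous_on_h0CW)
      (simp add: symD_eq_cbox fmeasurableD)
  show "\<forall>\<^sub>F n in sequentially. spec_norm (cw_seq \<Gamma> B n - cw_model \<Gamma> B n)
      \<le> 3 * (6 * \<bar>\<Gamma>\<bar> / real (n - 1) + 6 * \<bar>B\<bar> * sqrt (2 / real (n - 1)))"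
    using eventually_ge_at_top[of 2] by eventually_elim (rule spec_norm_cw_seq_minus_model_le)
  have "(\<lambda>n. 3 * (6 * \<bar>\<Gamma>\<bar> / real n + 6 * \<bar>B\<bar> * sqrt (2 / real n))) \<longlonglongrightarrow> 3 * (0 + 6 * \<bar>B\<bar> * 0)"
    by (intro tendsto_intros lim_const_over_n tendsto_real_sqrt[OF lim_const_over_n, unfolded real_sqrt_zero])
  then show "(\<lambda>n. 3 * (6 * \<bar>\<Gamma>\<bar> / real (n - 1) + 6 * \<bar>B\<bar> * sqrt (2 / real (n - 1)))) \<longlonglongrightarrow> 0"
    by (subst filterlim_sequentially_Suc[symmetric]) simp
qed

theorem mainTheorem6:
  fixes \<Gamma> B :: real
  assumes "\<Gamma> > 0"
  shows "GLT (\<lambda>n. if n = 0 then 0\<^sub>m 0 0 else map_mat complex_of_real (Hbar \<Gamma> B (n - 1))) (h0CW \<Gamma> B)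
    \<and> sigma_distributed (\<lambda>N. map_mat complex_of_real (Hbar \<Gamma> B N)) (h0CW \<Gamma> B)
    \<and> lambda_distributed (\<lambda>N. map_mat complex_of_real (Hbar \<Gamma> B N)) (h0CW \<Gamma> B)"
  using GLT_cw_seq[of \<Gamma> B] Hbar_distributions[of \<Gamma> B] unfolding cw_seq_def[abs_def] by blast

end
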